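(* Assume (A1), (A3) and the additivity condition (Add). Define $\hat f(x,\alpha):=f(x,0)+\sum_{i=1}^m\alpha_i\big(f(x,\mathbf 1_i)-f(x,0)\big)$ and $\hat r(x,\alpha):=r(x,0)+\sum_{i=1}^m\alpha_i\big(r(x,\mathbf 1_i)-r(x,0)\big)$ for $x\in\mathbb R^n$, $\alpha\in\mathbb R^m$, and the reformulated payoff $\hat J(\alpha):=\int_0^T\hat r(y^\alpha(t),\alpha)dt+q(y^\alpha(T))$, where $y^\alpha$ solves $\dot y(t)=\hat f(y(t),\alpha)$, $y(0)=\mathbf x$. If $\hat J$ is concave on $[0,1]^m$, then for every $\bar\alpha\in\{0,1\}^m$, $$D^{NS}J(\bar\alpha)^\top(\alpha-\bar\alpha)\ge J(\alpha)-J(\bar\alpha)\quad\text{for all }\alpha\in\{0,1\}^m.$$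
   Context: Fix $n,m\ge1$, $T>0$, $\mathcal X\subseteq\mathbb R^n$, $\mathbf x\in\mathcal X$, $f:\mathbb R^n\times\mathbb R^m\to\mathbb R^n$, $r:\mathbb R^n\times\mathbb R^m\to\mathbb R$, $q:\mathbb R^n\to\mathbb R$. For $\beta\in\{0,1\}^m$, $x^\beta$ solves $\dot x=f(x,\beta)$, $x(0)=\mathbf x$ on $[0,T]$ (solutions assumed to exist uniquely); $\mathcal J(z,\beta)=\int_0^T r(z(t),\beta)dt+q(z(T))$, $J(\beta)=\mathcal J(x^\beta,\beta)$. $\mathbf 1_i$ is the $i$-th standard basis vector of $\mathbb R^m$. (A1): for each $\alpha\in\{0,1\}^m$, $f(\cdot,\alpha)$ is $C^2$ and globally Lipschitz on $\mathcal X$. (A3): for each $\alpha\in\{0,1\}^m$, $r(\cdot,\alpha)$ and $q$ are continuously differentiable. (Add): for all $x\in\mathcal X$ and $\alpha\in\{0,1\}^m$, $f(x,\alpha)=f(x,0)+\sum_{i=1}^m\big(f(x,\alpha_i\mathbf 1_i)-f(x,0)\big)$ and $r(x,\alpha)=r(x,0)+\sum_{i=1}^m\big(r(x,\alpha_i\mathbf 1_i)-r(x,0)\big)$. Nonstandard derivative: for $\bar\alpha,\alpha\in\{0,1\}^m$, $\epsilon\in[0,1]$, let $x^{\epsilon(\bar\alpha,\alpha)}$ solve $\dot x=(1-\epsilon)f(x,\bar\alpha)+\epsilon f(x,\alpha)$, $x(0)=\mathbf x$, and $\mathcal J^{\epsilon(\bar\alpha,\alpha)}(z)=(1-\epsilon)\mathcal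 J(z,\bar\alpha)+\epsilon\mathcal J(z,\alpha)$. Then $[D^{NS}J(\bar\alpha)]_i=\lim_{\epsilon\to0^+}\frac1\epsilon[\mathcal J^{\epsilon(\bar\alpha,\bar\alpha+\mathbf 1_i)}(x^{\epsilon(\bar\alpha,\bar\alpha+\mathbf 1_i)})-\mathcal J(x^{\bar\alpha},\bar\alpha)]$ if $\bar\alpha_i=0$, and $\lim_{\epsilon\to0^+}\frac1\epsilon[\mathcal J(x^{\bar\alpha},\bar\alpha)-\mathcal J^{\epsilon(\bar\alpha,\bar\alpha-\mathbf 1_i)}(x^{\epsilon(\bar\alpha,\bar\alpha-\mathbf 1_i)})]$ if $\bar\alpha_i=1$. *)

theory Defs
  imports "HOL-Analysis.Analysis"
begin

definition binary :: "(real^'m) set" where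
  "binary = {a. \<forall>i. a $ i = 0 \<or> a $ i = 1}"

definition unit_cube :: "(real^'m) set" where
  "unit_cube = {a. \<forall>i. 0 \<le> a $ i \<and> a $ i \<le> 1}"

definition e :: "'m::finite \<Rightarrow> real^'m" where
  "e i = axis i 1"

definition C1 :: "('a::euclidean_space \<Rightarrow> 'b::euclidean_space) \<Rightarrow> bool" where
  "C1 g \<longleftrightarrow> (\<exists>g'. (\<forall>x. (g has_derivative blinfun_apply (g' x)) (at x)) \<and> continuous_on UNIV g')"

definition C2 :: "('a::euclidean_space \<Rightarrow> 'b::euclidean_space) \<Rightarrow> bool" where
  "C2 g \<longleftrightarrow> (\<exists>g' g''. (\<forall>x. (g has_derivative blinfun_apply (g' x)) (at x)) \<and>
                       (\<forall>x. (g' has_derivative blinfun_apply (g'' x)) (at x)) \<and>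
                       continuous_on UNIV g'')"

definition solves :: "(real^'n) set \<Rightarrow> real \<Rightarrow> real^'n \<Rightarrow> (real^'n \<Rightarrow> real^'n) \<Rightarrow> (real \<Rightarrow> real^'n) \<Rightarrow> bool" where
  "solves X T x0 F z \<longleftrightarrow> z 0 = x0 \<and>
     (\<forall>t\<in>{0..T}. z t \<in> X \<and> (z has_vector_derivative F (z t)) (at t within {0..T}))"

definition unique_sol :: "(real^'n) set \<Rightarrow> real \<Rightarrow> real^'n \<Rightarrow> (real^'n \<Rightarrow> real^'n) \<Rightarrow> bool" where
  "unique_sol X T x0 F \<longleftrightarrow> (\<exists>z. solves X T x0 F z) \<and>
     (\<forall>z1 z2. solves X T x0 F z1 \<and> solves X T x0 F z2 \<longrightarrow> (\<forall>t\<in>{0..T}. z1 t = z2 t))"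

definition traj :: "(real^'n) set \<Rightarrow> real \<Rightarrow> real^'n \<Rightarrow> (real^'n \<Rightarrow> real^'n) \<Rightarrow> real \<Rightarrow> real^'n" where
  "traj X T x0 F = (SOME z. solves X T x0 F z)"

definition Jcal :: "real \<Rightarrow> (real^'n \<Rightarrow> real^'m \<Rightarrow> real) \<Rightarrow> (real^'n \<Rightarrow> real)
                     \<Rightarrow> (real \<Rightarrow> real^'n) \<Rightarrow> real^'m \<Rightarrow> real" where
  "Jcal T r q z b = integral {0..T} (\<lambda>t. r (z t) b) + q (z T)"

definition Jpay :: "(real^'n) set \<Rightarrow> real \<Rightarrow> real^'n \<Rightarrow> (real^'n \<Rightarrow> real^'m \<Rightarrow> real^'n)
                     \<Rightarrow> (real^'n \<Rightarrow> real^'m \<Rightarrow> real) \<Rightarrow> (real^'n \<Rightarrow> real) \<Rightarrow> real^'m \<Rightarrow> real" where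
  "Jpay X T x0 f r q b = Jcal T r q (traj X T x0 (\<lambda>y. f y b)) b"

definition Jeps :: "(real^'n) set \<Rightarrow> real \<Rightarrow> real^'n \<Rightarrow> (real^'n \<Rightarrow> real^'m \<Rightarrow> real^'n)
                     \<Rightarrow> (real^'n \<Rightarrow> real^'m \<Rightarrow> real) \<Rightarrow> (real^'n \<Rightarrow> real)
                     \<Rightarrow> real^'m \<Rightarrow> real^'m \<Rightarrow> real \<Rightarrow> real" where
  "Jeps X T x0 f r q ab a eps =
     (let z = traj X T x0 (\<lambda>y. (1 - eps) *\<^sub>R f y ab + eps *\<^sub>R f y a)
      in (1 - eps) * Jcal T r q z ab + eps * Jcal T r q z a)"

definition DNS :: "(real^'n) set \<Rightarrow> real \<Rightarrow> real^'n \<Rightarrow> (real^'n \<Rightarrow> real^'m \<Rightarrow> real^'n)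
                     \<Rightarrow> (real^'n \<Rightarrow> real^'m \<Rightarrow> real) \<Rightarrow> (real^'n \<Rightarrow> real)
                     \<Rightarrow> real^'m \<Rightarrow> 'm::finite \<Rightarrow> real" where
  "DNS X T x0 f r q ab i =
     (if ab $ i = 0 then
        Lim (at_right 0) (\<lambda>eps. (Jeps X T x0 f r q ab (ab + e i) eps - Jpay X T x0 f r q ab) / eps)
      else
        Lim (at_right 0) (\<lambda>eps. (Jpay X T x0 f r q ab - Jeps X T x0 f r q ab (ab - e i) eps) / eps))"

definition fhat :: "(real^'n \<Rightarrow> real^'m \<Rightarrow> real^'n) \<Rightarrow> real^'n \<Rightarrow> real^'m::finite \<Rightarrow> real^'n" where
  "fhat f x a = f x 0 + (\<Sum>i\<in>UNIV. (a $ i) *\<^sub>R (f x (e i) - f x 0))"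

definition rhat :: "(real^'n \<Rightarrow> real^'m \<Rightarrow> real) \<Rightarrow> real^'n \<Rightarrow> real^'m::finite \<Rightarrow> real" where
  "rhat r x a = r x 0 + (\<Sum>i\<in>UNIV. (a $ i) * (r x (e i) - r x 0))"

definition Jhat :: "(real^'n) set \<Rightarrow> real \<Rightarrow> real^'n \<Rightarrow> (real^'n \<Rightarrow> real^'m \<Rightarrow> real^'n)
                     \<Rightarrow> (real^'n \<Rightarrow> real^'m \<Rightarrow> real) \<Rightarrow> (real^'n \<Rightarrow> real) \<Rightarrow> real^'m::finite \<Rightarrow> real" where
  "Jhat X T x0 f r q a =
     (let y = traj X T x0 (\<lambda>z. fhat f z a)
      in integral {0..T} (\<lambda>t. rhat r (y t) a) + q (y T))"

end

theory Submission
  imports Defs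
begin

text \<open>On binary controls the relaxed data \<open>fhat\<close>, \<open>rhat\<close> agree with \<open>f\<close>, \<open>r\<close> by (Add), and the
  \<open>\<epsilon>\<close>-convexified dynamics between two binary controls is \<open>fhat\<close> at their convex combination. Hence
  \<open>J = Jhat\<close> on binary controls, and for a binary base control \<open>\<beta>\<close> each term
  \<open>D\<^sup>N\<^sup>S J(\<beta>)\<^sub>i (\<alpha>\<^sub>i - \<beta>\<^sub>i)\<close> is the one-sided derivative of \<open>Jhat\<close> at \<open>\<beta>\<close> in the coordinate direction
  \<open>(\<alpha>\<^sub>i - \<beta>\<^sub>i) 1\<^sub>i\<close>. Concavity bounds \<open>Jhat \<alpha> - Jhat \<beta>\<close> by the one-sided derivative in the
  direction \<open>\<alpha> - \<beta>\<close>, so it remains to split that derivative into the coordinate directions. As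
  \<open>fhat\<close> and \<open>rhat\<close> are affine in the control, the increment of \<open>Jhat\<close> is, up to \<open>o(\<delta>)\<close>, linear in
  the control increment \<open>\<delta>\<close> and in the induced increment of the trajectory, and Gronwall's inequality
  for the linearized equation shows that the trajectory increments are themselves additive in \<open>\<delta>\<close>
  up to \<open>o(\<delta>)\<close>.\<close>

lemma gronwall_inequality:
  fixes u :: "real \<Rightarrow> real"
  assumes cont: "continuous_on {0..T} u" and K: "0 \<le> K"
    and le: "\<And>t. t \<in> {0..T} \<Longrightarrow> u t \<le> a + K * integral {0..t} u"
    and t: "t \<in> {0..T}"
  shows "u t \<le> a * exp (K * t)"
proof -
  define w where "w s = a + K * integral {0..s} u" for s
  define h where "h s = w s * exp (- K * s)" for s
  have dI: "((\<lambda>s. integral {0..s} u) has_real_derivative u s) (at s within {0..T})"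
    if "s \<in> {0..T}" for s
    using integral_has_vector_derivative[OF cont that]
    by (simp add: has_real_derivative_iff_has_vector_derivative)
  have dh: "(h has_real_derivative (K * u s * exp (- K * s) - K * w s * exp (- K * s))) (at s within {0..T})"
    if "s \<in> {0..T}" for s
    unfolding h_def w_def
    by (rule derivative_eq_intros dI[OF that] refl | simp add: algebra_simps)+
  have "continuous_on {0..T} h"
    using dh by (meson DERIV_continuous continuous_on_eq_continuous_within)
  then have hcont: "continuous_on {0..t} h"
    using t by (auto elim: continuous_on_subset)
  have "h t \<le> h 0"
  proof (rule DERIV_nonpos_imp_decreasing_open[of 0 t h])
    show "0 \<le> t" using t by auto
    fix x assume x: "0 < x" "x < t"
    then have "at x within {0..T} = at x" using t by (simp add: at_within_Icc_at)
    with dh[of x] x t have "(h has_real_derivative (K * u x * exp (- K * x) - K * w x * exp (- K * x))) (at x)"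
      by auto
    moreover have "K * u x \<le> K * w x"
      using le[of x] x t K unfolding w_def by (simp add: mult_left_mono)
    then have "K * u x * exp (- K * x) - K * w x * exp (- K * x) \<le> 0"
      by (simp add: mult_right_mono)
    ultimately show "\<exists>y. (h has_real_derivative y) (at x) \<and> y \<le> 0" by blast
  qed (use hcont in auto)
  then have "w t \<le> a * exp (K * t)"
    unfolding h_def w_def by (simp add: exp_minus field_simps)
  then show ?thesis using le[OF t] unfolding w_def by auto
qed

lemma uniformly_continuous_near_compact:
  fixes g :: "'a::euclidean_space \<Rightarrow> 'b::metric_space"
  assumes "continuous_on UNIV g" and "compact S" and "\<epsilon> > 0"
  obtains d where "d > 0" and "\<And>x w. x \<in> S \<Longrightarrow> dist w x < d \<Longrightarrow> dist (g w) (g x) < \<epsilon>"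
proof -
  define S1 where "S1 = {x + v | x v. x \<in> S \<and> v \<in> cball (0::'a) 1}"
  have "compact S1" unfolding S1_def by (rule compact_sums[OF assms(2) compact_cball])
  then have "uniformly_continuous_on S1 g"
    using assms(1) by (meson compact_uniformly_continuous continuous_on_subset subset_UNIV)
  then obtain d where d: "d > 0" and
    dd: "\<And>x x'. x \<in> S1 \<Longrightarrow> x' \<in> S1 \<Longrightarrow> dist x' x < d \<Longrightarrow> dist (g x') (g x) < \<epsilon>"
    using assms(3) unfolding uniformly_continuous_on_def by metis
  have S1: "w \<in> S1" if "x \<in> S" "dist w x \<le> 1" for x w
  proof -
    have "w = x + (w - x) \<and> x \<in> S \<and> w - x \<in> cball 0 1"
      using that by (simp add: dist_norm norm_minus_commute)
    then show ?thesis unfolding S1_def by blast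
  qed
  show ?thesis
    by (rule that[of "min d 1"]) (use d in \<open>auto intro!: dd S1\<close>)
qed

lemma uniform_linearization_on_compact:
  fixes P :: "'a::euclidean_space \<Rightarrow> 'b::euclidean_space" and P' :: "'a \<Rightarrow> 'a \<Rightarrow>\<^sub>L 'b"
  assumes dP: "\<And>x. (P has_derivative blinfun_apply (P' x)) (at x)"
    and cP': "continuous_on UNIV P'" and S: "compact S" and e: "\<epsilon> > 0"
  obtains \<eta> where "\<eta> > 0"
    and "\<And>x v. x \<in> S \<Longrightarrow> norm v < \<eta> \<Longrightarrow> norm (P (x + v) - P x - P' x v) \<le> \<epsilon> * norm v"
proof -
  obtain d where d: "d > 0" and dd: "\<And>x w. x \<in> S \<Longrightarrow> dist w x < d \<Longrightarrow> dist (P' w) (P' x) < \<epsilon>"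
    using uniformly_continuous_near_compact[OF cP' S e] by blast
  show ?thesis
  proof (rule that[OF d])
    fix x and v :: 'a assume x: "x \<in> S" and v: "norm v < d"
    let ?G = "closed_segment x (x + v)"
    have "norm (P (x + v) - P x - blinfun_apply (P' x) (x + v - x)) \<le> norm (x + v - x) * \<epsilon>"
    proof (rule differentiable_bound_linearization[where S="?G" and f'="\<lambda>w. blinfun_apply (P' w)"])
      show "\<And>t. t \<in> {0..1} \<Longrightarrow> x + t *\<^sub>R (x + v - x) \<in> ?G"
        by (auto simp: closed_segment_def algebra_simps)
      show "\<And>w. w \<in> ?G \<Longrightarrow> (P has_derivative blinfun_apply (P' w)) (at w within ?G)"
        using dP has_derivative_at_withinI by blast
      fix w assume w: "w \<in> ?G"
      have "dist w x \<le> norm v"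
        using segment_bound[OF w] by (simp add: dist_norm norm_minus_commute)
      then have "dist (P' w) (P' x) < \<epsilon>" using dd[OF x] v by simp
      then show "onorm (blinfun_apply (P' w) - blinfun_apply (P' x)) \<le> \<epsilon>"
        by (simp add: dist_norm norm_blinfun.rep_eq minus_blinfun.rep_eq fun_diff_def)
    qed simp
    then show "norm (P (x + v) - P x - P' x v) \<le> \<epsilon> * norm v"
      by (simp add: mult.commute)
  qed
qed

definition norm1 :: "real^'m::finite \<Rightarrow> real" where
  "norm1 d = (\<Sum>j\<in>UNIV. \<bar>d $ j\<bar>)"

lemma norm1_nonneg: "norm1 d \<ge> 0"
  unfolding norm1_def by (simp add: sum_nonneg)

lemma norm1_scaleR: "norm1 (c *\<^sub>R d) = \<bar>c\<bar> * norm1 d"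
  unfolding norm1_def by (simp add: abs_mult sum_distrib_left)

lemma norm_sum_scaleR_le_norm1:
  fixes \<Gamma> :: "'m::finite \<Rightarrow> 'b::real_normed_vector"
  assumes "\<And>j. norm (\<Gamma> j) \<le> M"
  shows "norm (\<Sum>j\<in>UNIV. \<delta> $ j *\<^sub>R \<Gamma> j) \<le> norm1 \<delta> * M"
proof -
  have "norm (\<Sum>j\<in>UNIV. \<delta> $ j *\<^sub>R \<Gamma> j) \<le> (\<Sum>j\<in>UNIV. \<bar>\<delta> $ j\<bar> * M)"
    by (rule order_trans[OF norm_sum sum_mono]) (simp add: assms mult_left_mono)
  also have "\<dots> = norm1 \<delta> * M" unfolding norm1_def by (simp add: sum_distrib_right)
  finally show ?thesis .
qed

lemma linearization_with_perturbed_coefficients: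
  fixes P :: "'a::euclidean_space \<Rightarrow> 'b::euclidean_space" and P' :: "'a \<Rightarrow> 'a \<Rightarrow>\<^sub>L 'b"
    and g :: "'m::finite \<Rightarrow> 'a \<Rightarrow> 'b"
  assumes dP: "\<And>x. (P has_derivative blinfun_apply (P' x)) (at x)"
    and cP': "continuous_on UNIV P'" and cg: "\<And>j. continuous_on UNIV (g j)"
    and S: "compact S" and C: "0 \<le> C" and e: "\<epsilon> > 0"
  obtains \<eta> where "\<eta> > 0"
    and "\<And>x v \<delta>. x \<in> S \<Longrightarrow> norm v \<le> C * norm1 \<delta> \<Longrightarrow> norm1 \<delta> \<le> \<eta> \<Longrightarrow>
           norm (P (x + v) - P x - P' x v + (\<Sum>j\<in>UNIV. \<delta> $ j *\<^sub>R (g j (x + v) - g j x))) \<le> \<epsilon> * norm1 \<delta>"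
proof -
  have e1: "\<epsilon> / (2 * (C + 1)) > 0" using e C by simp
  obtain \<eta>1 where \<eta>1: "\<eta>1 > 0" and lin:
    "\<And>x v. x \<in> S \<Longrightarrow> norm v < \<eta>1 \<Longrightarrow> norm (P (x + v) - P x - P' x v) \<le> \<epsilon> / (2 * (C + 1)) * norm v"
    using uniform_linearization_on_compact[OF dP cP' S e1] by blast
  have "\<forall>j. \<exists>d>0. \<forall>x w. x \<in> S \<longrightarrow> dist w x < d \<longrightarrow> dist (g j w) (g j x) < \<epsilon> / 2"
    using uniformly_continuous_near_compact[OF cg S, of "\<epsilon> / 2"] e by (metis half_gt_zero)
  then obtain d where d: "\<And>j. d j > 0"
    and cont: "\<And>j x w. x \<in> S \<Longrightarrow> dist w x < d j \<Longrightarrow> dist (g j w) (g j x) < \<epsilon> / 2"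
    by metis
  define \<eta>2 where "\<eta>2 = Min (range d)"
  have \<eta>2: "\<eta>2 > 0" "\<And>j. \<eta>2 \<le> d j"
    unfolding \<eta>2_def using d by (simp_all add: Min_gr_iff)
  show ?thesis
  proof (rule that[of "min \<eta>1 \<eta>2 / (C + 1)"])
    show "min \<eta>1 \<eta>2 / (C + 1) > 0" using \<eta>1 \<eta>2 C by simp
    fix x v :: 'a and \<delta> :: "real^'m"
    assume x: "x \<in> S" and v: "norm v \<le> C * norm1 \<delta>" and N: "norm1 \<delta> \<le> min \<eta>1 \<eta>2 / (C + 1)"
    have "C * norm1 \<delta> \<le> min \<eta>1 \<eta>2 * (C / (C + 1))"
      using mult_left_mono[OF N C] by (simp add: field_simps)
    also have "\<dots> < min \<eta>1 \<eta>2 * 1" using C \<eta>1 \<eta>2 by (intro mult_strict_left_mono) auto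
    finally have v_small: "norm v < min \<eta>1 \<eta>2" using v by linarith
    have "norm (P (x + v) - P x - P' x v) \<le> \<epsilon> / (2 * (C + 1)) * (C * norm1 \<delta>)"
      using lin[OF x] v_small v e1 by (meson min_less_iff_conj mult_left_mono less_imp_le order_trans)
    also have "\<dots> \<le> \<epsilon> / 2 * norm1 \<delta>"
      using C e norm1_nonneg[of \<delta>] by (simp add: field_simps mult_left_mono)
    finally have "norm (P (x + v) - P x - P' x v) \<le> \<epsilon> / 2 * norm1 \<delta>" .
    moreover have "norm (g j (x + v) - g j x) \<le> \<epsilon> / 2" for j
    proof -
      have "dist (x + v) x < d j" using v_small \<eta>2(2)[of j] by (simp add: dist_norm)
      then show ?thesis using cont[OF x] by (simp add: dist_norm less_imp_le)
    qed
    then have "norm (\<Sum>j\<in>UNIV. \<delta> $ j *\<^sub>R (g j (x + v) - g j x)) \<le> norm1 \<delta> * (\<epsilon> / 2)"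
      by (rule norm_sum_scaleR_le_norm1)
    ultimately show "norm (P (x + v) - P x - P' x v + (\<Sum>j\<in>UNIV. \<delta> $ j *\<^sub>R (g j (x + v) - g j x)))
        \<le> \<epsilon> * norm1 \<delta>"
      by (intro order_trans[OF norm_triangle_ineq]) (simp add: mult.commute)
  qed
qed

lemma blinfun_affine_sum_defect:
  fixes A :: "'a::real_normed_vector \<Rightarrow>\<^sub>L 'b::real_normed_vector" and \<Gamma> :: "'m::finite \<Rightarrow> 'b"
    and ys :: "'k::finite \<Rightarrow> 'a"
  assumes "\<delta>0 = (\<Sum>i\<in>UNIV. \<delta>s i)"
  shows "(A y0 + (\<Sum>j\<in>UNIV. \<delta>0 $ j *\<^sub>R \<Gamma> j)) - (\<Sum>i\<in>UNIV. A (ys i) + (\<Sum>j\<in>UNIV. \<delta>s i $ j *\<^sub>R \<Gamma> j))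
     = A (y0 - (\<Sum>i\<in>UNIV. ys i))"
proof -
  have "(\<Sum>j\<in>UNIV. \<delta>0 $ j *\<^sub>R \<Gamma> j) = (\<Sum>j\<in>UNIV. \<Sum>i\<in>UNIV. \<delta>s i $ j *\<^sub>R \<Gamma> j)"
    unfolding assms sum_component scaleR_sum_left ..
  also have "\<dots> = (\<Sum>i\<in>UNIV. \<Sum>j\<in>UNIV. \<delta>s i $ j *\<^sub>R \<Gamma> j)"
    by (rule sum.swap)
  finally show ?thesis
    by (simp add: blinfun.diff_right blinfun.sum_right sum.distrib algebra_simps)
qed

lemma integral_blinfun_affine_sum_defect:
  fixes A :: "real \<Rightarrow> 'a::real_normed_vector \<Rightarrow>\<^sub>L 'b::euclidean_space" and \<Gamma> :: "'m::finite \<Rightarrow> real \<Rightarrow> 'b"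
    and ys :: "'k::finite \<Rightarrow> real \<Rightarrow> 'a"
  assumes int0: "(\<lambda>s. A s (y0 s) + (\<Sum>j\<in>UNIV. \<delta>0 $ j *\<^sub>R \<Gamma> j s)) integrable_on S"
    and int: "\<And>i. (\<lambda>s. A s (ys i s) + (\<Sum>j\<in>UNIV. \<delta>s i $ j *\<^sub>R \<Gamma> j s)) integrable_on S"
    and sum: "\<delta>0 = (\<Sum>i\<in>UNIV. \<delta>s i)"
  shows "integral S (\<lambda>s. A s (y0 s) + (\<Sum>j\<in>UNIV. \<delta>0 $ j *\<^sub>R \<Gamma> j s))
     - (\<Sum>i\<in>UNIV. integral S (\<lambda>s. A s (ys i s) + (\<Sum>j\<in>UNIV. \<delta>s i $ j *\<^sub>R \<Gamma> j s)))
     = integral S (\<lambda>s. A s (y0 s - (\<Sum>i\<in>UNIV. ys i s)))"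
proof -
  have "(\<Sum>i\<in>UNIV. integral S (\<lambda>s. A s (ys i s) + (\<Sum>j\<in>UNIV. \<delta>s i $ j *\<^sub>R \<Gamma> j s)))
     = integral S (\<lambda>s. \<Sum>i\<in>UNIV. A s (ys i s) + (\<Sum>j\<in>UNIV. \<delta>s i $ j *\<^sub>R \<Gamma> j s))"
    by (rule integral_sum[symmetric]) (use int in auto)
  moreover have "(\<lambda>s. \<Sum>i\<in>UNIV. A s (ys i s) + (\<Sum>j\<in>UNIV. \<delta>s i $ j *\<^sub>R \<Gamma> j s)) integrable_on S"
    by (rule integrable_sum) (use int in auto)
  ultimately have "integral S (\<lambda>s. A s (y0 s) + (\<Sum>j\<in>UNIV. \<delta>0 $ j *\<^sub>R \<Gamma> j s))
     - (\<Sum>i\<in>UNIV. integral S (\<lambda>s. A s (ys i s) + (\<Sum>j\<in>UNIV. \<delta>s i $ j *\<^sub>R \<Gamma> j s)))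
     = integral S (\<lambda>s. (A s (y0 s) + (\<Sum>j\<in>UNIV. \<delta>0 $ j *\<^sub>R \<Gamma> j s))
         - (\<Sum>i\<in>UNIV. A s (ys i s) + (\<Sum>j\<in>UNIV. \<delta>s i $ j *\<^sub>R \<Gamma> j s)))"
    using integral_diff[OF int0] by simp
  also have "\<dots> = integral S (\<lambda>s. A s (y0 s - (\<Sum>i\<in>UNIV. ys i s)))"
    by (rule integral_cong) (rule blinfun_affine_sum_defect[OF sum])
  finally show ?thesis .
qed

lemma norm_sum_defect_le:
  fixes a0 :: "'a::real_normed_vector" and a :: "'k::finite \<Rightarrow> 'a"
  assumes "norm a0 \<le> c * m0" and "\<And>i. norm (a i) \<le> c * m i"
  shows "norm (a0 - (\<Sum>i\<in>UNIV. a i)) \<le> c * (m0 + (\<Sum>i\<in>UNIV. m i))"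
proof -
  have "norm (a0 - (\<Sum>i\<in>UNIV. a i)) \<le> norm a0 + (\<Sum>i\<in>UNIV. norm (a i))"
    by (rule order_trans[OF norm_triangle_ineq4 add_left_mono[OF norm_sum]])
  also have "\<dots> \<le> c * m0 + (\<Sum>i\<in>UNIV. c * m i)"
    using assms by (intro add_mono sum_mono)
  finally show ?thesis by (simp add: distrib_left sum_distrib_left)
qed

lemma norm_integral_blinfun_le:
  fixes A :: "real \<Rightarrow> 'a::euclidean_space \<Rightarrow>\<^sub>L 'b::euclidean_space" and z :: "real \<Rightarrow> 'a"
  assumes "continuous_on {a..b} A" and "continuous_on {a..b} z"
    and "\<And>s. s \<in> {a..b} \<Longrightarrow> norm (A s) \<le> B"
  shows "norm (integral {a..b} (\<lambda>s. A s (z s))) \<le> B * integral {a..b} (\<lambda>s. norm (z s))"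
proof -
  have "norm (integral {a..b} (\<lambda>s. A s (z s))) \<le> integral {a..b} (\<lambda>s. B * norm (z s))"
  proof (rule integral_norm_bound_integral)
    show "(\<lambda>s. A s (z s)) integrable_on {a..b}"
      by (intro integrable_continuous_real blinfun.continuous_on assms)
    show "(\<lambda>s. B * norm (z s)) integrable_on {a..b}"
      by (intro integrable_continuous_real continuous_intros assms)
    fix s assume "s \<in> {a..b}"
    then show "norm (A s (z s)) \<le> B * norm (z s)"
      using norm_blinfun[of "A s" "z s"] assms(3) by (meson mult_right_mono norm_ge_zero order_trans)
  qed
  then show ?thesis by simp
qed

lemma antimono_at_right_tendsto_Sup:
  fixes \<psi> :: "real \<Rightarrow> real"
  assumes anti: "\<And>s s'. 0 < s \<Longrightarrow> s \<le> s' \<Longrightarrow> s' \<le> 1 \<Longrightarrow> \<psi> s' \<le> \<psi> s"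
    and bounded: "\<And>s. 0 < s \<Longrightarrow> s \<le> \<eta> \<Longrightarrow> \<psi> s \<le> C" and \<eta>: "\<eta> > 0"
  shows "(\<psi> \<longlongrightarrow> Sup (\<psi> ` {0<..1})) (at_right 0)"
    and "\<And>s. s \<in> {0<..1} \<Longrightarrow> \<psi> s \<le> Sup (\<psi> ` {0<..1})"
proof -
  define \<eta>' where "\<eta>' = min \<eta> 1"
  have \<eta>': "0 < \<eta>'" "\<eta>' \<le> \<eta>" "\<eta>' \<le> 1" unfolding \<eta>'_def using \<eta> by auto
  have bdd: "bdd_above (\<psi> ` {0<..1})"
  proof (rule bdd_aboveI2)
    fix s :: real assume s: "s \<in> {0<..1}"
    show "\<psi> s \<le> C"
    proof (cases "s \<le> \<eta>'")
      case False
      then have "\<psi> s \<le> \<psi> \<eta>'" using anti[of \<eta>' s] s \<eta>' by auto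
      also have "\<dots> \<le> C" using bounded \<eta>' by auto
      finally show ?thesis .
    qed (use bounded s \<eta>' in auto)
  qed
  show upper: "\<And>s. s \<in> {0<..1} \<Longrightarrow> \<psi> s \<le> Sup (\<psi> ` {0<..1})"
    using bdd by (intro cSUP_upper) auto
  show "(\<psi> \<longlongrightarrow> Sup (\<psi> ` {0<..1})) (at_right 0)"
  proof (rule increasing_tendsto)
    have "\<forall>\<^sub>F s in at_right (0::real). s \<in> {0<..<1}" by (rule eventually_at_right_real) simp
    then show "\<forall>\<^sub>F s in at_right 0. \<psi> s \<le> Sup (\<psi> ` {0<..1})"
      by eventually_elim (auto intro: upper)
    fix x assume "x < Sup (\<psi> ` {0<..1})"
    then obtain s0 where s0: "s0 \<in> {0<..1}" "x < \<psi> s0"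
      using less_cSUP_iff[OF _ bdd] by auto
    have "\<forall>\<^sub>F s in at_right (0::real). s \<in> {0<..<s0}" by (rule eventually_at_right_real) (use s0 in auto)
    then show "\<forall>\<^sub>F s in at_right 0. x < \<psi> s"
      by eventually_elim (use anti[of _ s0] s0 in force)
  qed
qed

lemma concave_on_difference_quotient_antimono:
  fixes h :: "'a::real_vector \<Rightarrow> real"
  assumes conc: "concave_on S h" and x: "x \<in> S" and xv: "x + v \<in> S"
    and s: "0 < s" "s \<le> s'" "s' \<le> 1"
  shows "(h (x + s' *\<^sub>R v) - h x) / s' \<le> (h (x + s *\<^sub>R v) - h x) / s"
proof -
  have "convex S" using conc by (simp add: concave_on_iff)
  then have "(1 - s') *\<^sub>R x + s' *\<^sub>R (x + v) \<in> S"
    using x xv s by (intro convexD) auto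
  then have xs': "x + s' *\<^sub>R v \<in> S" by (simp add: algebra_simps)
  define l where "l = s / s'"
  have l: "0 \<le> l" "l \<le> 1" unfolding l_def using s by auto
  have "(1 - l) *\<^sub>R x + l *\<^sub>R (x + s' *\<^sub>R v) = x + s *\<^sub>R v"
    unfolding l_def using s by (simp add: algebra_simps)
  then have "h (x + s *\<^sub>R v) \<ge> (1 - l) * h x + l * h (x + s' *\<^sub>R v)"
    using concave_onD[OF conc l x xs'] by simp
  then have "l * (h (x + s' *\<^sub>R v) - h x) \<le> h (x + s *\<^sub>R v) - h x"
    by (simp add: algebra_simps)
  then show ?thesis
    unfolding l_def using s by (simp add: field_simps)
qed

lemma e_nth: "e i $ j = (if j = i then 1 else 0)"
  unfolding e_def axis_def by simp

lemma sum_e_expansion: "(\<Sum>i\<in>UNIV. d $ i *\<^sub>R e i) = d"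
  unfolding e_def using basis_expansion[of d] by (simp add: scalar_mult_eq_scaleR)

lemma norm1_scaleR_e: "norm1 (c *\<^sub>R e i) = \<bar>c\<bar>"
  unfolding norm1_def by (simp add: e_nth if_distrib cong: if_cong)

lemma norm1_coordinate_le: "norm1 (d $ i *\<^sub>R e i) \<le> norm1 d"
  using member_le_sum[of i UNIV "\<lambda>j. \<bar>d $ j\<bar>"] by (simp only: norm1_scaleR_e) (simp add: norm1_def)

lemma sum_norm1_coordinates: "(\<Sum>i\<in>UNIV. norm1 (d $ i *\<^sub>R e i)) = norm1 d"
  by (simp only: norm1_scaleR_e) (simp add: norm1_def)

lemma convex_unit_cube: "convex unit_cube"
  unfolding unit_cube_def
proof (rule convex_box_cart)
  show "convex {x. 0 \<le> x \<and> x \<le> (1::real)}"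
    using convex_real_interval(5)[of 0 1] by (simp add: atLeastAtMost_def atLeast_def atMost_def Collect_conj_eq)
qed

lemma unit_cube_coordinate_segment:
  assumes "\<beta> \<in> unit_cube" and "\<alpha> \<in> unit_cube" and "0 \<le> s" and "s \<le> 1"
  shows "\<beta> + s *\<^sub>R ((\<alpha> $ i - \<beta> $ i) *\<^sub>R e i) \<in> unit_cube"
proof -
  have "0 \<le> (1 - s) * \<beta> $ i + s * \<alpha> $ i" "(1 - s) * \<beta> $ i + s * \<alpha> $ i \<le> 1"
    using assms unfolding unit_cube_def by (auto intro!: convex_bound_le add_nonneg_nonneg)
  then show ?thesis
    using assms(1) unfolding unit_cube_def by (auto simp: e_nth algebra_simps)
qed

lemma zero_binary: "0 \<in> binary"
  unfolding binary_def by simp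

lemma e_binary: "e i \<in> binary"
  unfolding binary_def by (simp add: e_nth)

lemma binary_imp_unit_cube: "b \<in> binary \<Longrightarrow> b \<in> unit_cube"
proof -
  assume "b \<in> binary"
  then have "b $ i = 0 \<or> b $ i = 1" for i unfolding binary_def by blast
  then have "0 \<le> b $ i \<and> b $ i \<le> 1" for i by (metis order_refl zero_le_one)
  then show ?thesis unfolding unit_cube_def by blast
qed

section \<open>Trajectories of control-affine systems\<close>

definition C1_deriv :: "('a::euclidean_space \<Rightarrow> 'b::euclidean_space) \<Rightarrow> 'a \<Rightarrow> 'a \<Rightarrow>\<^sub>L 'b" where
  "C1_deriv g = (SOME g'. (\<forall>x. (g has_derivative blinfun_apply (g' x)) (at x)) \<and> continuous_on UNIV g')"

lemma C1_deriv:
  assumes "C1 g"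
  shows "(g has_derivative blinfun_apply (C1_deriv g x)) (at x)" and "continuous_on UNIV (C1_deriv g)"
  using someI_ex[OF assms[unfolded C1_def]] unfolding C1_deriv_def by blast+

lemma C1_imp_continuous_on: "C1 g \<Longrightarrow> continuous_on S g"
  unfolding C1_def by (meson continuous_at_imp_continuous_on has_derivative_continuous)

lemma C2_imp_C1: "C2 g \<Longrightarrow> C1 g"
  unfolding C2_def C1_def
  by (meson continuous_at_imp_continuous_on has_derivative_continuous)

lemma traj_solves: "unique_sol X T x0 F \<Longrightarrow> solves X T x0 F (traj X T x0 F)"
  unfolding unique_sol_def traj_def by (metis someI_ex)

lemma traj_eq_solution:
  assumes "unique_sol X T x0 F" and "solves X T x0 F z" and "t \<in> {0..T}"
  shows "traj X T x0 F t = z t"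
  using assms traj_solves[OF assms(1)] unfolding unique_sol_def by blast

lemma solves_cong:
  assumes "solves X T x0 F z" and "\<And>y. y \<in> X \<Longrightarrow> F y = F' y"
  shows "solves X T x0 F' z"
  using assms unfolding solves_def by auto

lemma solves_continuous_on: "solves X T x0 F z \<Longrightarrow> continuous_on {0..T} z"
  unfolding solves_def
  using has_vector_derivative_continuous continuous_on_eq_continuous_within by blast

lemma solves_integral_eq:
  assumes "solves X T x0 F z" and t: "t \<in> {0..T}"
  shows "z t = x0 + integral {0..t} (\<lambda>s. F (z s))"
proof -
  have "((\<lambda>s. F (z s)) has_integral (z t - z 0)) {0..t}"
  proof (rule fundamental_theorem_of_calculus)
    fix s assume s: "s \<in> {0..t}"
    then have "(z has_vector_derivative F (z s)) (at s within {0..T})"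
      using assms t unfolding solves_def by auto
    then show "(z has_vector_derivative F (z s)) (at s within {0..t})"
      by (rule has_vector_derivative_within_subset) (use t in auto)
  qed (use t in simp)
  then show ?thesis using assms(1) unfolding solves_def by (simp add: integral_unique)
qed

lemma integrable_on_initial_segment:
  fixes g :: "real \<Rightarrow> 'b::euclidean_space"
  shows "continuous_on {0..T} g \<Longrightarrow> t \<in> {0..T} \<Longrightarrow> g integrable_on {0..t}"
  by (rule integrable_continuous_real) (auto elim: continuous_on_subset)

locale affine_control_system =
  fixes X :: "(real^'n::finite) set" and T :: real and x0 :: "real^'n"
    and F :: "real^'m::finite \<Rightarrow> real^'n \<Rightarrow> real^'n" and G :: "'m \<Rightarrow> real^'n \<Rightarrow> real^'n"
  assumes T_pos: "0 < T"
    and F_affine: "\<And>\<alpha> y. F \<alpha> y = F 0 y + (\<Sum>j\<in>UNIV. \<alpha> $ j *\<^sub>R G j y)"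
    and unique_sol_F: "\<And>\<alpha>. \<alpha> \<in> unit_cube \<Longrightarrow> unique_sol X T x0 (F \<alpha>)"
    and continuous_F0: "continuous_on UNIV (F 0)"
    and continuous_G: "\<And>j. continuous_on UNIV (G j)"
    and lipschitz_F: "\<exists>K. \<forall>\<alpha>\<in>unit_cube. K-lipschitz_on X (F \<alpha>)"
begin

definition sol :: "real^'m \<Rightarrow> real \<Rightarrow> real^'n" where
  "sol \<alpha> = traj X T x0 (F \<alpha>)"

lemma F_diff: "F \<alpha> y - F \<beta> y = (\<Sum>j\<in>UNIV. (\<alpha> $ j - \<beta> $ j) *\<^sub>R G j y)"
  by (subst (1 2) F_affine) (simp add: sum_subtractf scaleR_diff_left)

lemma continuous_on_F: "continuous_on S (F \<alpha>)"
proof -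
  have "continuous_on UNIV (\<lambda>y. F 0 y + (\<Sum>j\<in>UNIV. \<alpha> $ j *\<^sub>R G j y))"
    by (intro continuous_intros continuous_F0 continuous_G)
  then show ?thesis by (subst F_affine[abs_def]) (auto elim: continuous_on_subset)
qed

lemma sol_solves: "\<alpha> \<in> unit_cube \<Longrightarrow> solves X T x0 (F \<alpha>) (sol \<alpha>)"
  unfolding sol_def by (rule traj_solves[OF unique_sol_F])

lemma sol_in_X: "\<alpha> \<in> unit_cube \<Longrightarrow> t \<in> {0..T} \<Longrightarrow> sol \<alpha> t \<in> X"
  using sol_solves unfolding solves_def by blast

lemma continuous_on_sol: "\<alpha> \<in> unit_cube \<Longrightarrow> continuous_on {0..T} (sol \<alpha>)"
  by (rule solves_continuous_on[OF sol_solves])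

lemma continuous_on_comp_sol:
  "\<alpha> \<in> unit_cube \<Longrightarrow> continuous_on UNIV \<Gamma> \<Longrightarrow> continuous_on {0..T} (\<lambda>s. \<Gamma> (sol \<alpha> s))"
  by (rule continuous_on_compose2[OF _ continuous_on_sol]) auto

lemma sol_diff_integral:
  assumes a: "\<alpha> \<in> unit_cube" and b: "\<beta> \<in> unit_cube" and t: "t \<in> {0..T}"
  shows "sol \<alpha> t - sol \<beta> t = integral {0..t} (\<lambda>s. F \<alpha> (sol \<alpha> s) - F \<beta> (sol \<beta> s))"
proof -
  have "(\<lambda>s. F \<gamma> (sol \<gamma> s)) integrable_on {0..t}" if "\<gamma> \<in> unit_cube" for \<gamma>
    by (rule integrable_on_initial_segment[OF continuous_on_comp_sol[OF that continuous_on_F] t])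
  then show ?thesis
    using solves_integral_eq[OF sol_solves[OF a] t] solves_integral_eq[OF sol_solves[OF b] t] a b
    by (simp add: integral_diff)
qed

lemma bounded_along_sol:
  fixes \<Gamma> :: "real^'n \<Rightarrow> 'b::real_normed_vector"
  assumes "\<beta> \<in> unit_cube" and "continuous_on UNIV \<Gamma>"
  obtains M where "M \<ge> 0" and "\<And>s. s \<in> {0..T} \<Longrightarrow> norm (\<Gamma> (sol \<beta> s)) \<le> M"
  using continuous_on_compact_bound[OF compact_Icc continuous_on_comp_sol[OF assms]] by blast

lemma bounded_family_along_sol:
  fixes \<Gamma> :: "'j::finite \<Rightarrow> real^'n \<Rightarrow> 'b::real_normed_vector"
  assumes "\<beta> \<in> unit_cube" and "\<And>j. continuous_on UNIV (\<Gamma> j)"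
  obtains M where "M \<ge> 0" and "\<And>j s. s \<in> {0..T} \<Longrightarrow> norm (\<Gamma> j (sol \<beta> s)) \<le> M"
proof -
  have "continuous_on UNIV (\<lambda>y. \<Sum>j\<in>UNIV. norm (\<Gamma> j y))"
    by (intro continuous_intros assms(2))
  then obtain M where "M \<ge> 0" and M: "\<And>s. s \<in> {0..T} \<Longrightarrow> norm (\<Sum>j\<in>UNIV. norm (\<Gamma> j (sol \<beta> s))) \<le> M"
    using bounded_along_sol[OF assms(1)] by blast
  moreover have "norm (\<Gamma> j (sol \<beta> s)) \<le> M" if "s \<in> {0..T}" for j s
    using member_le_sum[of j UNIV "\<lambda>j. norm (\<Gamma> j (sol \<beta> s))"] M[OF that] by simp
  ultimately show ?thesis using that by blast
qed

lemma sol_diff_le_integral: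
  assumes b: "\<beta> \<in> unit_cube" and a: "\<beta> + \<delta> \<in> unit_cube" and t: "t \<in> {0..T}"
    and Lip: "K-lipschitz_on X (F (\<beta> + \<delta>))"
    and Mg0: "Mg \<ge> 0" and Mg: "\<And>j s. s \<in> {0..T} \<Longrightarrow> norm (G j (sol \<beta> s)) \<le> Mg"
  shows "norm (sol (\<beta> + \<delta>) t - sol \<beta> t)
    \<le> norm1 \<delta> * Mg * T + K * integral {0..t} (\<lambda>s. norm (sol (\<beta> + \<delta>) s - sol \<beta> s))"
proof -
  define u where "u s = norm (sol (\<beta> + \<delta>) s - sol \<beta> s)" for s
  have uc: "continuous_on {0..T} u" unfolding u_def
    by (intro continuous_intros continuous_on_sol a b)
  have pointwise: "norm (F (\<beta> + \<delta>) (sol (\<beta> + \<delta>) s) - F \<beta> (sol \<beta> s)) \<le> K * u s + norm1 \<delta> * Mg"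
    if "s \<in> {0..t}" for s
  proof -
    have sT: "s \<in> {0..T}" using that t by auto
    have "norm (F (\<beta> + \<delta>) (sol (\<beta> + \<delta>) s) - F (\<beta> + \<delta>) (sol \<beta> s)) \<le> K * u s"
      using lipschitz_onD[OF Lip sol_in_X[OF a sT] sol_in_X[OF b sT]]
      unfolding u_def by (simp add: dist_norm)
    moreover have "F (\<beta> + \<delta>) (sol \<beta> s) - F \<beta> (sol \<beta> s) = (\<Sum>j\<in>UNIV. \<delta> $ j *\<^sub>R G j (sol \<beta> s))"
      by (simp add: F_diff)
    then have "norm (F (\<beta> + \<delta>) (sol \<beta> s) - F \<beta> (sol \<beta> s)) \<le> norm1 \<delta> * Mg"
      using norm_sum_scaleR_le_norm1[of "\<lambda>j. G j (sol \<beta> s)" Mg \<delta>] Mg[OF sT] by simp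
    ultimately show ?thesis
      using norm_triangle_le[of "F (\<beta> + \<delta>) (sol (\<beta> + \<delta>) s) - F (\<beta> + \<delta>) (sol \<beta> s)"
          "F (\<beta> + \<delta>) (sol \<beta> s) - F \<beta> (sol \<beta> s)"] by simp
  qed
  have "u t = norm (integral {0..t} (\<lambda>s. F (\<beta> + \<delta>) (sol (\<beta> + \<delta>) s) - F \<beta> (sol \<beta> s)))"
    unfolding u_def using sol_diff_integral[OF a b t] by simp
  also have "\<dots> \<le> integral {0..t} (\<lambda>s. K * u s + norm1 \<delta> * Mg)"
  proof (rule integral_norm_bound_integral[OF _ _ pointwise])
    show "(\<lambda>s. F (\<beta> + \<delta>) (sol (\<beta> + \<delta>) s) - F \<beta> (sol \<beta> s)) integrable_on {0..t}"
      using continuous_on_comp_sol[OF a continuous_on_F] continuous_on_comp_sol[OF b continuous_on_F]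
      by (intro integrable_on_initial_segment[OF _ t] continuous_on_diff)
    show "(\<lambda>s. K * u s + norm1 \<delta> * Mg) integrable_on {0..t}"
      by (intro integrable_on_initial_segment[OF _ t] continuous_intros uc)
  qed
  also have "\<dots> = K * integral {0..t} u + norm1 \<delta> * Mg * t"
  proof -
    have "(\<lambda>s. K * u s) integrable_on {0..t}"
      by (intro integrable_on_initial_segment[OF _ t] continuous_intros uc)
    then show ?thesis
      using t by (simp add: integral_add integrable_on_const integral_mult_right)
  qed
  also have "\<dots> \<le> K * integral {0..t} u + norm1 \<delta> * Mg * T"
    using t Mg0 norm1_nonneg[of \<delta>] by (intro add_left_mono mult_left_mono) auto
  finally show ?thesis unfolding u_def by simp
qed

lemma sol_diff_le_norm1:
  assumes b: "\<beta> \<in> unit_cube"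
  obtains C where "C \<ge> 0"
    and "\<And>\<delta> t. \<beta> + \<delta> \<in> unit_cube \<Longrightarrow> t \<in> {0..T} \<Longrightarrow> norm (sol (\<beta> + \<delta>) t - sol \<beta> t) \<le> C * norm1 \<delta>"
proof -
  obtain K where Lip: "\<And>\<alpha>. \<alpha> \<in> unit_cube \<Longrightarrow> K-lipschitz_on X (F \<alpha>)"
    using lipschitz_F by blast
  have K: "0 \<le> K" using lipschitz_on_nonneg[OF Lip[OF b]] .
  obtain Mg where Mg0: "Mg \<ge> 0" and Mg: "\<And>j s. s \<in> {0..T} \<Longrightarrow> norm (G j (sol \<beta> s)) \<le> Mg"
    using bounded_family_along_sol[where \<Gamma> = G, OF b continuous_G] by blast
  show ?thesis
  proof (rule that[of "Mg * T * exp (K * T)"])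
    show "0 \<le> Mg * T * exp (K * T)" using Mg0 T_pos by simp
    fix \<delta> t assume a: "\<beta> + \<delta> \<in> unit_cube" and t: "t \<in> {0..T}"
    have "continuous_on {0..T} (\<lambda>s. norm (sol (\<beta> + \<delta>) s - sol \<beta> s))"
      by (intro continuous_intros continuous_on_sol a b)
    from gronwall_inequality[OF this K _ t] sol_diff_le_integral[OF b a _ Lip[OF a] Mg0 Mg]
    have "norm (sol (\<beta> + \<delta>) t - sol \<beta> t) \<le> (norm1 \<delta> * Mg * T) * exp (K * t)"
      by blast
    also have "\<dots> \<le> (norm1 \<delta> * Mg * T) * exp (K * T)"
      using t K Mg0 T_pos norm1_nonneg[of \<delta>] by (intro mult_left_mono) (auto intro: mult_left_mono)
    finally show "norm (sol (\<beta> + \<delta>) t - sol \<beta> t) \<le> Mg * T * exp (K * T) * norm1 \<delta>"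
      by (simp add: algebra_simps)
  qed
qed

lemma linearization_along_sol:
  fixes \<Phi> :: "real^'m \<Rightarrow> real^'n \<Rightarrow> 'b::euclidean_space" and \<Gamma> :: "'m \<Rightarrow> real^'n \<Rightarrow> 'b"
    and P :: "real^'n \<Rightarrow> 'b"
  assumes \<Phi>_affine: "\<And>\<alpha> y. \<Phi> \<alpha> y - \<Phi> \<beta> y = (\<Sum>j\<in>UNIV. (\<alpha> $ j - \<beta> $ j) *\<^sub>R \<Gamma> j y)"
    and P: "C1 P" and P_eq: "\<And>y. y \<in> X \<Longrightarrow> \<Phi> \<beta> y = P y"
    and \<Gamma>: "\<And>j. continuous_on UNIV (\<Gamma> j)"
    and b: "\<beta> \<in> unit_cube" and e: "\<epsilon> > 0"
  obtains \<eta> where "\<eta> > 0"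
    and "\<And>\<delta> s. \<beta> + \<delta> \<in> unit_cube \<Longrightarrow> norm1 \<delta> \<le> \<eta> \<Longrightarrow> s \<in> {0..T} \<Longrightarrow>
      norm (\<Phi> (\<beta> + \<delta>) (sol (\<beta> + \<delta>) s) - \<Phi> \<beta> (sol \<beta> s)
        - C1_deriv P (sol \<beta> s) (sol (\<beta> + \<delta>) s - sol \<beta> s)
        - (\<Sum>j\<in>UNIV. \<delta> $ j *\<^sub>R \<Gamma> j (sol \<beta> s))) \<le> \<epsilon> * norm1 \<delta>"
proof -
  obtain C where C: "C \<ge> 0" and
    sol_diff: "\<And>\<delta> t. \<beta> + \<delta> \<in> unit_cube \<Longrightarrow> t \<in> {0..T} \<Longrightarrow> norm (sol (\<beta> + \<delta>) t - sol \<beta> t) \<le> C * norm1 \<delta>"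
    using sol_diff_le_norm1[OF b] by blast
  have S: "compact (sol \<beta> ` {0..T})"
    by (rule compact_continuous_image[OF continuous_on_sol[OF b] compact_Icc])
  obtain \<eta> where \<eta>: "\<eta> > 0" and lin: "\<And>x v \<delta>. x \<in> sol \<beta> ` {0..T} \<Longrightarrow> norm v \<le> C * norm1 \<delta> \<Longrightarrow> norm1 \<delta> \<le> \<eta> \<Longrightarrow>
     norm (P (x + v) - P x - C1_deriv P x v + (\<Sum>j\<in>UNIV. \<delta> $ j *\<^sub>R (\<Gamma> j (x + v) - \<Gamma> j x))) \<le> \<epsilon> * norm1 \<delta>"
    using linearization_with_perturbed_coefficients[where g = \<Gamma>, OF C1_deriv[OF P] \<Gamma> S C e] by blast
  show ?thesis
  proof (rule that[OF \<eta>])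
    fix \<delta> s assume a: "\<beta> + \<delta> \<in> unit_cube" and N: "norm1 \<delta> \<le> \<eta>" and s: "s \<in> {0..T}"
    define x where "x = sol \<beta> s"
    define v where "v = sol (\<beta> + \<delta>) s - sol \<beta> s"
    have xv: "sol (\<beta> + \<delta>) s = x + v" unfolding x_def v_def by simp
    have "\<Phi> (\<beta> + \<delta>) (x + v) = P (x + v) + (\<Sum>j\<in>UNIV. \<delta> $ j *\<^sub>R \<Gamma> j (x + v))"
      using \<Phi>_affine[of "\<beta> + \<delta>" "x + v"] P_eq[of "x + v"] sol_in_X[OF a s]
      unfolding xv by (simp add: diff_eq_eq add.commute)
    moreover have "\<Phi> \<beta> x = P x" using P_eq sol_in_X[OF b s] unfolding x_def by blast
    ultimately have eq: "\<Phi> (\<beta> + \<delta>) (x + v) - \<Phi> \<beta> x - C1_deriv P x v - (\<Sum>j\<in>UNIV. \<delta> $ j *\<^sub>R \<Gamma> j x)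
        = P (x + v) - P x - C1_deriv P x v + (\<Sum>j\<in>UNIV. \<delta> $ j *\<^sub>R (\<Gamma> j (x + v) - \<Gamma> j x))"
      by (simp add: scaleR_diff_right sum_subtractf algebra_simps)
    have v_le: "norm v \<le> C * norm1 \<delta>" unfolding v_def using sol_diff[OF a s] .
    have x_in: "x \<in> sol \<beta> ` {0..T}" unfolding x_def using s by blast
    have "norm (\<Phi> (\<beta> + \<delta>) (x + v) - \<Phi> \<beta> x - C1_deriv P x v - (\<Sum>j\<in>UNIV. \<delta> $ j *\<^sub>R \<Gamma> j x))
        \<le> \<epsilon> * norm1 \<delta>"
      unfolding eq by (rule lin[OF x_in v_le N])
    then show "norm (\<Phi> (\<beta> + \<delta>) (sol (\<beta> + \<delta>) s) - \<Phi> \<beta> (sol \<beta> s)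
        - C1_deriv P (sol \<beta> s) (sol (\<beta> + \<delta>) s - sol \<beta> s)
        - (\<Sum>j\<in>UNIV. \<delta> $ j *\<^sub>R \<Gamma> j (sol \<beta> s))) \<le> \<epsilon> * norm1 \<delta>"
      unfolding x_def v_def by simp
  qed
qed

end

section \<open>Payoff near a base control\<close>

locale control_payoff = affine_control_system X T x0 F G
  for X :: "(real^'n::finite) set" and T x0 and F :: "real^'m::finite \<Rightarrow> real^'n \<Rightarrow> real^'n" and G +
  fixes R :: "real^'m \<Rightarrow> real^'n \<Rightarrow> real" and H :: "'m \<Rightarrow> real^'n \<Rightarrow> real"
    and q :: "real^'n \<Rightarrow> real" and \<beta> :: "real^'m"
    and F\<beta> :: "real^'n \<Rightarrow> real^'n" and R\<beta> :: "real^'n \<Rightarrow> real"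
  assumes R_affine: "\<And>\<alpha> y. R \<alpha> y = R 0 y + (\<Sum>j\<in>UNIV. \<alpha> $ j * H j y)"
    and continuous_R0: "continuous_on UNIV (R 0)"
    and continuous_H: "\<And>j. continuous_on UNIV (H j)"
    and base_in_cube: "\<beta> \<in> unit_cube"
    \<comment> \<open>(Add) holds only on \<open>X\<close>; off \<open>X\<close> the data at \<open>\<beta>\<close> are replaced by \<open>C\<^sup>1\<close> maps\<close>
    and C1_F\<beta>: "C1 F\<beta>" and F\<beta>_eq: "\<And>y. y \<in> X \<Longrightarrow> F \<beta> y = F\<beta> y"
    and C1_R\<beta>: "C1 R\<beta>" and R\<beta>_eq: "\<And>y. y \<in> X \<Longrightarrow> R \<beta> y = R\<beta> y"
    and C1_q: "C1 q"
begin

abbreviation "DF \<equiv> C1_deriv F\<beta>"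
abbreviation "DR \<equiv> C1_deriv R\<beta>"
abbreviation "Dq \<equiv> C1_deriv q"

definition payoff :: "real^'m \<Rightarrow> real" where
  "payoff \<alpha> = integral {0..T} (\<lambda>t. R \<alpha> (sol \<alpha> t)) + q (sol \<alpha> T)"

definition dsol :: "real^'m \<Rightarrow> real \<Rightarrow> real^'n" where
  "dsol \<delta> t = sol (\<beta> + \<delta>) t - sol \<beta> t"

definition lin_dsol :: "real^'m \<Rightarrow> real \<Rightarrow> real^'n" where
  "lin_dsol \<delta> t = integral {0..t} (\<lambda>s. DF (sol \<beta> s) (dsol \<delta> s) + (\<Sum>j\<in>UNIV. \<delta> $ j *\<^sub>R G j (sol \<beta> s)))"

definition lin_payoff :: "real^'m \<Rightarrow> real" where
  "lin_payoff \<delta> = integral {0..T} (\<lambda>s. DR (sol \<beta> s) (dsol \<delta> s) + (\<Sum>j\<in>UNIV. \<delta> $ j *\<^sub>R H j (sol \<beta> s)))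
     + Dq (sol \<beta> T) (dsol \<delta> T)"

lemma R_diff: "R \<alpha> y - R \<gamma> y = (\<Sum>j\<in>UNIV. (\<alpha> $ j - \<gamma> $ j) *\<^sub>R H j y)"
  by (subst (1 2) R_affine) (simp add: sum_subtractf left_diff_distrib)

lemma continuous_on_R: "continuous_on S (R \<alpha>)"
proof -
  have "continuous_on UNIV (\<lambda>y. R 0 y + (\<Sum>j\<in>UNIV. \<alpha> $ j * H j y))"
    by (intro continuous_intros continuous_R0 continuous_H)
  then show ?thesis by (subst R_affine[abs_def]) (auto elim: continuous_on_subset)
qed

lemma continuous_on_dsol: "\<beta> + \<delta> \<in> unit_cube \<Longrightarrow> continuous_on {0..T} (dsol \<delta>)"
  unfolding dsol_def[abs_def] by (intro continuous_intros continuous_on_sol base_in_cube)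

lemma continuous_on_lin_integrand:
  fixes A :: "real^'n \<Rightarrow> (real^'n) \<Rightarrow>\<^sub>L 'b::real_normed_vector" and \<Gamma> :: "'m \<Rightarrow> real^'n \<Rightarrow> 'b"
  assumes "continuous_on UNIV A" and "\<And>j. continuous_on UNIV (\<Gamma> j)" and "\<beta> + \<delta> \<in> unit_cube"
  shows "continuous_on {0..T} (\<lambda>s. A (sol \<beta> s) (dsol \<delta> s) + (\<Sum>j\<in>UNIV. \<delta> $ j *\<^sub>R \<Gamma> j (sol \<beta> s)))"
  using continuous_on_comp_sol[OF base_in_cube assms(1)] continuous_on_dsol[OF assms(3)]
    continuous_on_comp_sol[OF base_in_cube assms(2)]
  by (intro continuous_intros blinfun.continuous_on) auto

lemma dsol_linearization:
  assumes e: "\<epsilon> > 0"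
  obtains \<eta> where "\<eta> > 0"
    and "\<And>\<delta> t. \<beta> + \<delta> \<in> unit_cube \<Longrightarrow> norm1 \<delta> \<le> \<eta> \<Longrightarrow> t \<in> {0..T} \<Longrightarrow>
           norm (dsol \<delta> t - lin_dsol \<delta> t) \<le> \<epsilon> * norm1 \<delta> * T"
proof -
  obtain \<eta> where \<eta>: "\<eta> > 0" and lin: "\<And>\<delta> s. \<beta> + \<delta> \<in> unit_cube \<Longrightarrow> norm1 \<delta> \<le> \<eta> \<Longrightarrow> s \<in> {0..T} \<Longrightarrow>
     norm (F (\<beta> + \<delta>) (sol (\<beta> + \<delta>) s) - F \<beta> (sol \<beta> s) - DF (sol \<beta> s) (dsol \<delta> s)
        - (\<Sum>j\<in>UNIV. \<delta> $ j *\<^sub>R G j (sol \<beta> s))) \<le> \<epsilon> * norm1 \<delta>"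
    using linearization_along_sol[OF F_diff C1_F\<beta> F\<beta>_eq continuous_G base_in_cube e]
    unfolding dsol_def by blast
  show ?thesis
  proof (rule that[OF \<eta>])
    fix \<delta> t assume a: "\<beta> + \<delta> \<in> unit_cube" and N: "norm1 \<delta> \<le> \<eta>" and t: "t \<in> {0..T}"
    define I where "I s = F (\<beta> + \<delta>) (sol (\<beta> + \<delta>) s) - F \<beta> (sol \<beta> s)" for s
    define L where "L s = DF (sol \<beta> s) (dsol \<delta> s) + (\<Sum>j\<in>UNIV. \<delta> $ j *\<^sub>R G j (sol \<beta> s))" for s
    have I: "I integrable_on {0..t}"
      unfolding I_def
      using continuous_on_comp_sol[OF a continuous_on_F] continuous_on_comp_sol[OF base_in_cube continuous_on_F]
      by (intro integrable_on_initial_segment[OF _ t] continuous_on_diff)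
    have L: "L integrable_on {0..t}"
      unfolding L_def[abs_def]
      by (intro integrable_on_initial_segment[OF _ t] continuous_on_lin_integrand
          C1_deriv(2)[OF C1_F\<beta>] continuous_G a)
    have "dsol \<delta> t - lin_dsol \<delta> t = integral {0..t} (\<lambda>s. I s - L s)"
      using sol_diff_integral[OF a base_in_cube t] integral_diff[OF I L]
      unfolding dsol_def lin_dsol_def I_def L_def by simp
    also have "norm \<dots> \<le> integral {0..t} (\<lambda>s. \<epsilon> * norm1 \<delta>)"
    proof (rule integral_norm_bound_integral[OF integrable_diff[OF I L]])
      fix s assume "s \<in> {0..t}"
      then have "s \<in> {0..T}" using t by auto
      then show "norm (I s - L s) \<le> \<epsilon> * norm1 \<delta>"
        using lin[OF a N] unfolding I_def L_def by (simp add: algebra_simps)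
    qed (simp add: integrable_on_const)
    also have "\<dots> = \<epsilon> * norm1 \<delta> * t" using t by simp
    also have "\<dots> \<le> \<epsilon> * norm1 \<delta> * T"
      using t e norm1_nonneg[of \<delta>] by (simp add: mult_left_mono)
    finally show "norm (dsol \<delta> t - lin_dsol \<delta> t) \<le> \<epsilon> * norm1 \<delta> * T" .
  qed
qed

lemma payoff_linearization:
  assumes e: "\<epsilon> > 0"
  obtains \<eta> where "\<eta> > 0"
    and "\<And>\<delta>. \<beta> + \<delta> \<in> unit_cube \<Longrightarrow> norm1 \<delta> \<le> \<eta> \<Longrightarrow>
           \<bar>payoff (\<beta> + \<delta>) - payoff \<beta> - lin_payoff \<delta>\<bar> \<le> \<epsilon> * norm1 \<delta> * (T + 1)"
proof -
  obtain \<eta>1 where \<eta>1: "\<eta>1 > 0" and lin_R: "\<And>\<delta> s. \<beta> + \<delta> \<in> unit_cube \<Longrightarrow> norm1 \<delta> \<le> \<eta>1 \<Longrightarrow> s \<in> {0..T} \<Longrightarrow>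
     norm (R (\<beta> + \<delta>) (sol (\<beta> + \<delta>) s) - R \<beta> (sol \<beta> s) - DR (sol \<beta> s) (dsol \<delta> s)
        - (\<Sum>j\<in>UNIV. \<delta> $ j *\<^sub>R H j (sol \<beta> s))) \<le> \<epsilon> * norm1 \<delta>"
    using linearization_along_sol[OF R_diff C1_R\<beta> R\<beta>_eq continuous_H base_in_cube e]
    unfolding dsol_def by blast
  obtain \<eta>2 where \<eta>2: "\<eta>2 > 0" and lin_q: "\<And>\<delta> s. \<beta> + \<delta> \<in> unit_cube \<Longrightarrow> norm1 \<delta> \<le> \<eta>2 \<Longrightarrow> s \<in> {0..T} \<Longrightarrow>
     norm (q (sol (\<beta> + \<delta>) s) - q (sol \<beta> s) - Dq (sol \<beta> s) (dsol \<delta> s)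
        - (\<Sum>j\<in>UNIV. \<delta> $ j *\<^sub>R (0::real))) \<le> \<epsilon> * norm1 \<delta>"
    using linearization_along_sol[where \<Phi> = "\<lambda>_. q" and \<Gamma> = "\<lambda>_ _. 0", OF _ C1_q _ _ base_in_cube e]
    unfolding dsol_def by auto
  show ?thesis
  proof (rule that[of "min \<eta>1 \<eta>2"])
    show "min \<eta>1 \<eta>2 > 0" using \<eta>1 \<eta>2 by simp
    fix \<delta> assume a: "\<beta> + \<delta> \<in> unit_cube" and N: "norm1 \<delta> \<le> min \<eta>1 \<eta>2"
    have T: "T \<in> {0..T}" using T_pos by simp
    define I where "I s = R (\<beta> + \<delta>) (sol (\<beta> + \<delta>) s) - R \<beta> (sol \<beta> s)" for s
    define L where "L s = DR (sol \<beta> s) (dsol \<delta> s) + (\<Sum>j\<in>UNIV. \<delta> $ j *\<^sub>R H j (sol \<beta> s))" for s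
    have R_int: "(\<lambda>s. R \<gamma> (sol \<gamma> s)) integrable_on {0..T}" if "\<gamma> \<in> unit_cube" for \<gamma>
      by (rule integrable_continuous_real[OF continuous_on_comp_sol[OF that continuous_on_R]])
    have I: "I integrable_on {0..T}"
      unfolding I_def[abs_def] by (intro integrable_diff R_int a base_in_cube)
    have L: "L integrable_on {0..T}"
      unfolding L_def[abs_def]
      by (intro integrable_continuous_real continuous_on_lin_integrand C1_deriv(2)[OF C1_R\<beta>] continuous_H a)
    have "payoff (\<beta> + \<delta>) - payoff \<beta> - lin_payoff \<delta>
        = integral {0..T} (\<lambda>s. I s - L s) + (q (sol (\<beta> + \<delta>) T) - q (sol \<beta> T) - Dq (sol \<beta> T) (dsol \<delta> T))"
      using integral_diff[OF I L] integral_diff[OF R_int[OF a] R_int[OF base_in_cube]]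
      unfolding payoff_def lin_payoff_def I_def L_def by simp
    moreover have "norm (integral {0..T} (\<lambda>s. I s - L s)) \<le> integral {0..T} (\<lambda>s. \<epsilon> * norm1 \<delta>)"
    proof (rule integral_norm_bound_integral[OF integrable_diff[OF I L]])
      fix s assume "s \<in> {0..T}"
      then show "norm (I s - L s) \<le> \<epsilon> * norm1 \<delta>"
        using lin_R[OF a] N unfolding I_def L_def by (simp add: algebra_simps)
    qed (simp add: integrable_on_const)
    moreover have "\<bar>q (sol (\<beta> + \<delta>) T) - q (sol \<beta> T) - Dq (sol \<beta> T) (dsol \<delta> T)\<bar> \<le> \<epsilon> * norm1 \<delta>"
      using lin_q[OF a _ T] N by simp
    ultimately show "\<bar>payoff (\<beta> + \<delta>) - payoff \<beta> - lin_payoff \<delta>\<bar> \<le> \<epsilon> * norm1 \<delta> * (T + 1)"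
      using T_pos by (simp add: algebra_simps abs_le_iff)
  qed
qed

lemma lin_payoff_le:
  obtains C where "\<And>\<delta>. \<beta> + \<delta> \<in> unit_cube \<Longrightarrow> \<bar>lin_payoff \<delta>\<bar> \<le> C * norm1 \<delta>"
proof -
  obtain C where C: "C \<ge> 0" and dsol_le: "\<And>\<delta> t. \<beta> + \<delta> \<in> unit_cube \<Longrightarrow> t \<in> {0..T} \<Longrightarrow> norm (dsol \<delta> t) \<le> C * norm1 \<delta>"
    using sol_diff_le_norm1[OF base_in_cube] unfolding dsol_def by blast
  obtain B where B: "B \<ge> 0" "\<And>s. s \<in> {0..T} \<Longrightarrow> norm (DR (sol \<beta> s)) \<le> B"
    using bounded_along_sol[OF base_in_cube C1_deriv(2)[OF C1_R\<beta>]] by blast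
  obtain M where M: "M \<ge> 0" "\<And>j s. s \<in> {0..T} \<Longrightarrow> norm (H j (sol \<beta> s)) \<le> M"
    using bounded_family_along_sol[where \<Gamma> = H, OF base_in_cube continuous_H] by blast
  define Bq where "Bq = norm (Dq (sol \<beta> T))"
  have T: "T \<in> {0..T}" using T_pos by simp
  show ?thesis
  proof (rule that[of "T * (B * C + M) + Bq * C"])
    fix \<delta> assume a: "\<beta> + \<delta> \<in> unit_cube"
    have "norm (integral {0..T} (\<lambda>s. DR (sol \<beta> s) (dsol \<delta> s) + (\<Sum>j\<in>UNIV. \<delta> $ j *\<^sub>R H j (sol \<beta> s))))
        \<le> integral {0..T} (\<lambda>s. (B * C + M) * norm1 \<delta>)"
    proof (rule integral_norm_bound_integral)
      show "(\<lambda>s. DR (sol \<beta> s) (dsol \<delta> s) + (\<Sum>j\<in>UNIV. \<delta> $ j *\<^sub>R H j (sol \<beta> s))) integrable_on {0..T}"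
        by (intro integrable_continuous_real continuous_on_lin_integrand C1_deriv(2)[OF C1_R\<beta>] continuous_H a)
      fix s assume s: "s \<in> {0..T}"
      have "norm (DR (sol \<beta> s) (dsol \<delta> s)) \<le> B * (C * norm1 \<delta>)"
        using norm_blinfun[of "DR (sol \<beta> s)" "dsol \<delta> s"] B dsol_le[OF a s] s
        by (meson mult_mono norm_ge_zero order_trans)
      moreover have "norm (\<Sum>j\<in>UNIV. \<delta> $ j *\<^sub>R H j (sol \<beta> s)) \<le> norm1 \<delta> * M"
        using M(2)[OF s] by (rule norm_sum_scaleR_le_norm1)
      ultimately show "norm (DR (sol \<beta> s) (dsol \<delta> s) + (\<Sum>j\<in>UNIV. \<delta> $ j *\<^sub>R H j (sol \<beta> s)))
          \<le> (B * C + M) * norm1 \<delta>"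
        using norm_triangle_le by (fastforce simp: algebra_simps)
    qed (simp add: integrable_on_const)
    moreover have "norm (Dq (sol \<beta> T) (dsol \<delta> T)) \<le> Bq * (C * norm1 \<delta>)"
      using norm_blinfun[of "Dq (sol \<beta> T)" "dsol \<delta> T"] dsol_le[OF a T] unfolding Bq_def
      by (meson mult_left_mono norm_ge_zero order_trans)
    ultimately show "\<bar>lin_payoff \<delta>\<bar> \<le> (T * (B * C + M) + Bq * C) * norm1 \<delta>"
      unfolding lin_payoff_def using T_pos by (simp add: algebra_simps abs_le_iff)
  qed
qed

lemma payoff_increment_le:
  obtains \<eta> C where "\<eta> > 0"
    and "\<And>\<delta>. \<beta> + \<delta> \<in> unit_cube \<Longrightarrow> norm1 \<delta> \<le> \<eta> \<Longrightarrow> \<bar>payoff (\<beta> + \<delta>) - payoff \<beta>\<bar> \<le> C * norm1 \<delta>"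
proof -
  obtain C where C: "\<And>\<delta>. \<beta> + \<delta> \<in> unit_cube \<Longrightarrow> \<bar>lin_payoff \<delta>\<bar> \<le> C * norm1 \<delta>"
    using lin_payoff_le by blast
  obtain \<eta> where "\<eta> > 0" and lin: "\<And>\<delta>. \<beta> + \<delta> \<in> unit_cube \<Longrightarrow> norm1 \<delta> \<le> \<eta> \<Longrightarrow>
      \<bar>payoff (\<beta> + \<delta>) - payoff \<beta> - lin_payoff \<delta>\<bar> \<le> 1 * norm1 \<delta> * (T + 1)"
    using payoff_linearization[of 1] by auto
  then show ?thesis
    using that[of \<eta> "C + (T + 1)"] C lin by (force simp: algebra_simps abs_le_iff)
qed

lemma lin_dsol_sum_defect:
  fixes \<delta>s :: "'k::finite \<Rightarrow> real^'m"
  assumes sum: "\<delta>0 = (\<Sum>i\<in>UNIV. \<delta>s i)" and a0: "\<beta> + \<delta>0 \<in> unit_cube"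
    and a: "\<And>i. \<beta> + \<delta>s i \<in> unit_cube" and t: "t \<in> {0..T}"
  shows "lin_dsol \<delta>0 t - (\<Sum>i\<in>UNIV. lin_dsol (\<delta>s i) t)
    = integral {0..t} (\<lambda>s. DF (sol \<beta> s) (dsol \<delta>0 s - (\<Sum>i\<in>UNIV. dsol (\<delta>s i) s)))"
  unfolding lin_dsol_def
  by (rule integral_blinfun_affine_sum_defect[where A = "\<lambda>s. DF (sol \<beta> s)", OF _ _ sum];
      intro integrable_on_initial_segment[OF _ t] continuous_on_lin_integrand
        C1_deriv(2)[OF C1_F\<beta>] continuous_G a0 a)

text \<open>The additivity defect of \<open>dsol\<close> satisfies the linearized equation up to errors that are
  \<open>o(\<delta>)\<close> uniformly in time, so Gronwall's inequality makes it \<open>o(\<delta>)\<close>.\<close>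
lemma dsol_additivity_defect:
  assumes e: "\<epsilon> > 0"
  obtains \<eta> where "\<eta> > 0"
    and "\<And>\<delta>0 (\<delta>s :: 'k::finite \<Rightarrow> real^'m) t. \<delta>0 = (\<Sum>i\<in>UNIV. \<delta>s i) \<Longrightarrow>
      \<beta> + \<delta>0 \<in> unit_cube \<Longrightarrow> (\<And>i. \<beta> + \<delta>s i \<in> unit_cube) \<Longrightarrow>
      norm1 \<delta>0 \<le> \<eta> \<Longrightarrow> (\<And>i. norm1 (\<delta>s i) \<le> \<eta>) \<Longrightarrow> t \<in> {0..T} \<Longrightarrow>
      norm (dsol \<delta>0 t - (\<Sum>i\<in>UNIV. dsol (\<delta>s i) t)) \<le> \<epsilon> * (norm1 \<delta>0 + (\<Sum>i\<in>UNIV. norm1 (\<delta>s i)))"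
proof -
  obtain B where B: "B \<ge> 0" "\<And>s. s \<in> {0..T} \<Longrightarrow> norm (DF (sol \<beta> s)) \<le> B"
    using bounded_along_sol[OF base_in_cube C1_deriv(2)[OF C1_F\<beta>]] by blast
  define \<epsilon>1 where "\<epsilon>1 = \<epsilon> / (T * exp (B * T))"
  have \<epsilon>1: "\<epsilon>1 > 0" unfolding \<epsilon>1_def using e T_pos by simp
  obtain \<eta> where \<eta>: "\<eta> > 0" and lin: "\<And>\<delta> t. \<beta> + \<delta> \<in> unit_cube \<Longrightarrow> norm1 \<delta> \<le> \<eta> \<Longrightarrow> t \<in> {0..T} \<Longrightarrow>
      norm (dsol \<delta> t - lin_dsol \<delta> t) \<le> \<epsilon>1 * norm1 \<delta> * T"
    using dsol_linearization[OF \<epsilon>1] by blast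
  show ?thesis
  proof (rule that[OF \<eta>])
    fix \<delta>0 and \<delta>s :: "'k \<Rightarrow> real^'m" and t
    assume sum: "\<delta>0 = (\<Sum>i\<in>UNIV. \<delta>s i)" and a0: "\<beta> + \<delta>0 \<in> unit_cube"
      and a: "\<And>i. \<beta> + \<delta>s i \<in> unit_cube" and N0: "norm1 \<delta>0 \<le> \<eta>" and N: "\<And>i. norm1 (\<delta>s i) \<le> \<eta>"
      and t: "t \<in> {0..T}"
    define M where "M = norm1 \<delta>0 + (\<Sum>i\<in>UNIV. norm1 (\<delta>s i))"
    have M: "M \<ge> 0" unfolding M_def by (simp add: norm1_nonneg sum_nonneg)
    define Z where "Z s = dsol \<delta>0 s - (\<Sum>i\<in>UNIV. dsol (\<delta>s i) s)" for s
    have Z: "continuous_on {0..T} Z" unfolding Z_def[abs_def]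
      by (intro continuous_intros continuous_on_dsol a0 a)
    have "norm (Z t) \<le> (\<epsilon>1 * T * M) * exp (B * t)"
    proof (rule gronwall_inequality[where u = "\<lambda>s. norm (Z s)", OF _ B(1) _ t])
      show "continuous_on {0..T} (\<lambda>s. norm (Z s))" by (intro continuous_intros Z)
      fix t assume t: "t \<in> {0..T}"
      have "norm (lin_dsol \<delta>0 t - (\<Sum>i\<in>UNIV. lin_dsol (\<delta>s i) t)) \<le> B * integral {0..t} (\<lambda>s. norm (Z s))"
        unfolding lin_dsol_sum_defect[OF sum a0 a t] Z_def[symmetric]
        using t B(2) continuous_on_comp_sol[OF base_in_cube C1_deriv(2)[OF C1_F\<beta>]] Z
        by (intro norm_integral_blinfun_le) (auto elim: continuous_on_subset)
      moreover have "norm ((dsol \<delta>0 t - lin_dsol \<delta>0 t) - (\<Sum>i\<in>UNIV. dsol (\<delta>s i) t - lin_dsol (\<delta>s i) t))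
          \<le> \<epsilon>1 * T * M"
        unfolding M_def using lin[OF a0 N0 t] lin[OF a N t]
        by (intro norm_sum_defect_le) (simp_all add: ac_simps)
      moreover have "Z t = (lin_dsol \<delta>0 t - (\<Sum>i\<in>UNIV. lin_dsol (\<delta>s i) t))
          + ((dsol \<delta>0 t - lin_dsol \<delta>0 t) - (\<Sum>i\<in>UNIV. dsol (\<delta>s i) t - lin_dsol (\<delta>s i) t))"
        unfolding Z_def by (simp add: sum_subtractf algebra_simps)
      ultimately show "norm (Z t) \<le> \<epsilon>1 * T * M + B * integral {0..t} (\<lambda>s. norm (Z s))"
        by (smt (verit) norm_triangle_ineq)
    qed
    also have "\<dots> \<le> (\<epsilon>1 * T * M) * exp (B * T)"
      using t B(1) \<epsilon>1 T_pos M by (intro mult_left_mono) (auto intro: mult_left_mono)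
    also have "\<dots> = \<epsilon> * M"
      unfolding \<epsilon>1_def using T_pos by simp
    finally show "norm (dsol \<delta>0 t - (\<Sum>i\<in>UNIV. dsol (\<delta>s i) t)) \<le> \<epsilon> * (norm1 \<delta>0 + (\<Sum>i\<in>UNIV. norm1 (\<delta>s i)))"
      unfolding Z_def M_def .
  qed
qed

lemma lin_payoff_sum_defect_le:
  obtains C where "C \<ge> 0"
    and "\<And>\<delta>0 (\<delta>s :: 'k::finite \<Rightarrow> real^'m) c. \<delta>0 = (\<Sum>i\<in>UNIV. \<delta>s i) \<Longrightarrow>
      \<beta> + \<delta>0 \<in> unit_cube \<Longrightarrow> (\<And>i. \<beta> + \<delta>s i \<in> unit_cube) \<Longrightarrow>
      (\<And>s. s \<in> {0..T} \<Longrightarrow> norm (dsol \<delta>0 s - (\<Sum>i\<in>UNIV. dsol (\<delta>s i) s)) \<le> c) \<Longrightarrow>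
      \<bar>lin_payoff \<delta>0 - (\<Sum>i\<in>UNIV. lin_payoff (\<delta>s i))\<bar> \<le> C * c"
proof -
  obtain B where B: "B \<ge> 0" "\<And>s. s \<in> {0..T} \<Longrightarrow> norm (DR (sol \<beta> s)) \<le> B"
    using bounded_along_sol[OF base_in_cube C1_deriv(2)[OF C1_R\<beta>]] by blast
  define Bq where "Bq = norm (Dq (sol \<beta> T))"
  show ?thesis
  proof (rule that[of "T * B + Bq"])
    show "T * B + Bq \<ge> 0" unfolding Bq_def using T_pos B by simp
    fix \<delta>0 and \<delta>s :: "'k \<Rightarrow> real^'m" and c
    assume sum: "\<delta>0 = (\<Sum>i\<in>UNIV. \<delta>s i)" and a0: "\<beta> + \<delta>0 \<in> unit_cube"
      and a: "\<And>i. \<beta> + \<delta>s i \<in> unit_cube"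
      and Z_le: "\<And>s. s \<in> {0..T} \<Longrightarrow> norm (dsol \<delta>0 s - (\<Sum>i\<in>UNIV. dsol (\<delta>s i) s)) \<le> c"
    define Z where "Z s = dsol \<delta>0 s - (\<Sum>i\<in>UNIV. dsol (\<delta>s i) s)" for s
    have T: "T \<in> {0..T}" using T_pos by simp
    have "integral {0..T} (\<lambda>s. DR (sol \<beta> s) (dsol \<delta>0 s) + (\<Sum>j\<in>UNIV. \<delta>0 $ j *\<^sub>R H j (sol \<beta> s)))
       - (\<Sum>i\<in>UNIV. integral {0..T} (\<lambda>s. DR (sol \<beta> s) (dsol (\<delta>s i) s) + (\<Sum>j\<in>UNIV. \<delta>s i $ j *\<^sub>R H j (sol \<beta> s))))
       = integral {0..T} (\<lambda>s. DR (sol \<beta> s) (Z s))"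
      unfolding Z_def
      by (rule integral_blinfun_affine_sum_defect[where A = "\<lambda>s. DR (sol \<beta> s)", OF _ _ sum];
          intro integrable_continuous_real continuous_on_lin_integrand C1_deriv(2)[OF C1_R\<beta>] continuous_H a0 a)
    moreover have "Dq (sol \<beta> T) (dsol \<delta>0 T) - (\<Sum>i\<in>UNIV. Dq (sol \<beta> T) (dsol (\<delta>s i) T)) = Dq (sol \<beta> T) (Z T)"
      unfolding Z_def by (simp add: blinfun.diff_right blinfun.sum_right)
    moreover have "norm (integral {0..T} (\<lambda>s. DR (sol \<beta> s) (Z s))) \<le> integral {0..T} (\<lambda>s. B * c)"
    proof (rule integral_norm_bound_integral)
      show "(\<lambda>s. DR (sol \<beta> s) (Z s)) integrable_on {0..T}"
        using continuous_on_comp_sol[OF base_in_cube C1_deriv(2)[OF C1_R\<beta>]]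
        unfolding Z_def[abs_def]
        by (intro integrable_continuous_real blinfun.continuous_on continuous_intros continuous_on_dsol a0 a)
      fix s assume s: "s \<in> {0..T}"
      show "norm (DR (sol \<beta> s) (Z s)) \<le> B * c"
        using norm_blinfun[of "DR (sol \<beta> s)" "Z s"] B Z_le[OF s] s unfolding Z_def
        by (meson mult_mono norm_ge_zero order_trans)
    qed (simp add: integrable_on_const)
    moreover have "norm (Dq (sol \<beta> T) (Z T)) \<le> Bq * c"
      using norm_blinfun[of "Dq (sol \<beta> T)" "Z T"] Z_le[OF T] unfolding Bq_def Z_def
      by (meson mult_left_mono norm_ge_zero order_trans)
    ultimately show "\<bar>lin_payoff \<delta>0 - (\<Sum>i\<in>UNIV. lin_payoff (\<delta>s i))\<bar> \<le> (T * B + Bq) * c"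
      unfolding lin_payoff_def sum.distrib using T_pos by (simp add: algebra_simps abs_le_iff)
  qed
qed

lemma payoff_additivity_defect:
  assumes e: "\<epsilon> > 0"
  obtains \<eta> where "\<eta> > 0"
    and "\<And>\<delta>0 (\<delta>s :: 'k::finite \<Rightarrow> real^'m). \<delta>0 = (\<Sum>i\<in>UNIV. \<delta>s i) \<Longrightarrow>
      \<beta> + \<delta>0 \<in> unit_cube \<Longrightarrow> (\<And>i. \<beta> + \<delta>s i \<in> unit_cube) \<Longrightarrow>
      norm1 \<delta>0 \<le> \<eta> \<Longrightarrow> (\<And>i. norm1 (\<delta>s i) \<le> \<eta>) \<Longrightarrow>
      \<bar>(payoff (\<beta> + \<delta>0) - payoff \<beta>) - (\<Sum>i\<in>UNIV. payoff (\<beta> + \<delta>s i) - payoff \<beta>)\<bar>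
        \<le> \<epsilon> * (norm1 \<delta>0 + (\<Sum>i\<in>UNIV. norm1 (\<delta>s i)))"
proof -
  obtain C where C: "C \<ge> 0" and lin_defect: "\<And>\<delta>0 (\<delta>s :: 'k \<Rightarrow> real^'m) c. \<delta>0 = (\<Sum>i\<in>UNIV. \<delta>s i) \<Longrightarrow>
      \<beta> + \<delta>0 \<in> unit_cube \<Longrightarrow> (\<And>i. \<beta> + \<delta>s i \<in> unit_cube) \<Longrightarrow>
      (\<And>s. s \<in> {0..T} \<Longrightarrow> norm (dsol \<delta>0 s - (\<Sum>i\<in>UNIV. dsol (\<delta>s i) s)) \<le> c) \<Longrightarrow>
      \<bar>lin_payoff \<delta>0 - (\<Sum>i\<in>UNIV. lin_payoff (\<delta>s i))\<bar> \<le> C * c"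
    using lin_payoff_sum_defect_le by blast
  define \<epsilon>1 where "\<epsilon>1 = \<epsilon> / (2 * (C + 1))"
  define \<epsilon>2 where "\<epsilon>2 = \<epsilon> / (2 * (T + 1))"
  have \<epsilon>12: "\<epsilon>1 > 0" "\<epsilon>2 > 0" unfolding \<epsilon>1_def \<epsilon>2_def using e T_pos C by simp_all
  obtain \<eta>1 where \<eta>1: "\<eta>1 > 0" and additive: "\<And>\<delta>0 (\<delta>s :: 'k \<Rightarrow> real^'m) t. \<delta>0 = (\<Sum>i\<in>UNIV. \<delta>s i) \<Longrightarrow>
      \<beta> + \<delta>0 \<in> unit_cube \<Longrightarrow> (\<And>i. \<beta> + \<delta>s i \<in> unit_cube) \<Longrightarrow>
      norm1 \<delta>0 \<le> \<eta>1 \<Longrightarrow> (\<And>i. norm1 (\<delta>s i) \<le> \<eta>1) \<Longrightarrow> t \<in> {0..T} \<Longrightarrow>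
      norm (dsol \<delta>0 t - (\<Sum>i\<in>UNIV. dsol (\<delta>s i) t)) \<le> \<epsilon>1 * (norm1 \<delta>0 + (\<Sum>i\<in>UNIV. norm1 (\<delta>s i)))"
    using dsol_additivity_defect[OF \<epsilon>12(1)] by blast
  obtain \<eta>2 where \<eta>2: "\<eta>2 > 0" and lin: "\<And>\<delta>. \<beta> + \<delta> \<in> unit_cube \<Longrightarrow> norm1 \<delta> \<le> \<eta>2 \<Longrightarrow>
      \<bar>payoff (\<beta> + \<delta>) - payoff \<beta> - lin_payoff \<delta>\<bar> \<le> \<epsilon>2 * norm1 \<delta> * (T + 1)"
    using payoff_linearization[OF \<epsilon>12(2)] by blast
  show ?thesis
  proof (rule that[of "min \<eta>1 \<eta>2"])
    show "min \<eta>1 \<eta>2 > 0" using \<eta>1 \<eta>2 by simp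
    fix \<delta>0 and \<delta>s :: "'k \<Rightarrow> real^'m"
    assume sum: "\<delta>0 = (\<Sum>i\<in>UNIV. \<delta>s i)" and a0: "\<beta> + \<delta>0 \<in> unit_cube"
      and a: "\<And>i. \<beta> + \<delta>s i \<in> unit_cube"
      and N0: "norm1 \<delta>0 \<le> min \<eta>1 \<eta>2" and N: "\<And>i. norm1 (\<delta>s i) \<le> min \<eta>1 \<eta>2"
    define M where "M = norm1 \<delta>0 + (\<Sum>i\<in>UNIV. norm1 (\<delta>s i))"
    have "\<bar>lin_payoff \<delta>0 - (\<Sum>i\<in>UNIV. lin_payoff (\<delta>s i))\<bar> \<le> C * (\<epsilon>1 * M)"
      by (rule lin_defect[OF sum a0 a]) (use additive[OF sum a0 a] N0 N in \<open>auto simp: M_def\<close>)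
    moreover have "norm ((payoff (\<beta> + \<delta>0) - payoff \<beta> - lin_payoff \<delta>0)
        - (\<Sum>i\<in>UNIV. payoff (\<beta> + \<delta>s i) - payoff \<beta> - lin_payoff (\<delta>s i))) \<le> (\<epsilon>2 * (T + 1)) * M"
      unfolding M_def using lin[OF a0] N0 lin[OF a] N
      by (intro norm_sum_defect_le) (simp_all add: ac_simps)
    moreover have "(\<Sum>i\<in>UNIV. payoff (\<beta> + \<delta>s i) - payoff \<beta> - lin_payoff (\<delta>s i))
        = (\<Sum>i\<in>UNIV. payoff (\<beta> + \<delta>s i) - payoff \<beta>) - (\<Sum>i\<in>UNIV. lin_payoff (\<delta>s i))"
      by (simp add: sum_subtractf)
    moreover have "C * (\<epsilon>1 * M) \<le> \<epsilon> / 2 * M"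
    proof -
      have "C * \<epsilon>1 \<le> \<epsilon> / 2" unfolding \<epsilon>1_def using C e by (simp add: field_simps)
      moreover have "M \<ge> 0" unfolding M_def by (simp add: norm1_nonneg sum_nonneg)
      ultimately have "(C * \<epsilon>1) * M \<le> (\<epsilon> / 2) * M" by (rule mult_right_mono)
      then show ?thesis by (simp add: mult.assoc)
    qed
    moreover have "\<epsilon>2 * (T + 1) * M = \<epsilon> / 2 * M"
      unfolding \<epsilon>2_def using T_pos by (simp add: field_simps)
    ultimately show "\<bar>(payoff (\<beta> + \<delta>0) - payoff \<beta>) - (\<Sum>i\<in>UNIV. payoff (\<beta> + \<delta>s i) - payoff \<beta>)\<bar>
        \<le> \<epsilon> * (norm1 \<delta>0 + (\<Sum>i\<in>UNIV. norm1 (\<delta>s i)))"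
      unfolding M_def[symmetric] real_norm_def by (simp only: abs_le_iff) linarith
  qed
qed

lemma payoff_difference_quotient_limit:
  assumes conc: "concave_on unit_cube payoff" and v: "\<beta> + v \<in> unit_cube"
  obtains L where "((\<lambda>s. (payoff (\<beta> + s *\<^sub>R v) - payoff \<beta>) / s) \<longlongrightarrow> L) (at_right 0)"
    and "\<And>s. 0 < s \<Longrightarrow> s \<le> 1 \<Longrightarrow> (payoff (\<beta> + s *\<^sub>R v) - payoff \<beta>) / s \<le> L"
proof -
  define \<psi> where "\<psi> s = (payoff (\<beta> + s *\<^sub>R v) - payoff \<beta>) / s" for s
  obtain \<eta> C where \<eta>: "\<eta> > 0" and incr: "\<And>\<delta>. \<beta> + \<delta> \<in> unit_cube \<Longrightarrow> norm1 \<delta> \<le> \<eta> \<Longrightarrow>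
      \<bar>payoff (\<beta> + \<delta>) - payoff \<beta>\<bar> \<le> C * norm1 \<delta>"
    using payoff_increment_le by blast
  have segment: "\<beta> + s *\<^sub>R v \<in> unit_cube" if "0 \<le> s" "s \<le> 1" for s
    using convexD[OF convex_unit_cube base_in_cube v, of "1 - s" s] that by (simp add: algebra_simps)
  have anti: "\<psi> s' \<le> \<psi> s" if "0 < s" "s \<le> s'" "s' \<le> 1" for s s'
    unfolding \<psi>_def by (rule concave_on_difference_quotient_antimono[OF conc base_in_cube v that])
  define \<eta>' where "\<eta>' = min 1 (\<eta> / (norm1 v + 1))"
  have \<eta>': "\<eta>' > 0" unfolding \<eta>'_def using \<eta> norm1_nonneg[of v] by simp
  have bounded: "\<psi> s \<le> C * norm1 v" if s: "0 < s" "s \<le> \<eta>'" for s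
  proof -
    have "s * norm1 v \<le> \<eta> / (norm1 v + 1) * (norm1 v + 1)"
      using s norm1_nonneg[of v] unfolding \<eta>'_def by (intro mult_mono) auto
    then have "norm1 (s *\<^sub>R v) \<le> \<eta>"
      using s norm1_nonneg[of v] by (simp add: norm1_scaleR)
    moreover have "s \<le> 1" using s unfolding \<eta>'_def by simp
    ultimately have "payoff (\<beta> + s *\<^sub>R v) - payoff \<beta> \<le> C * (s * norm1 v)"
      using incr[OF segment] s by (force simp: norm1_scaleR abs_le_iff)
    then show ?thesis unfolding \<psi>_def using s by (simp add: divide_le_eq algebra_simps)
  qed
  from antimono_at_right_tendsto_Sup[of \<psi>, OF anti bounded \<eta>'] show ?thesis
    using that unfolding \<psi>_def by auto
qed

lemma payoff_coordinate_splitting: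
  assumes a: "\<alpha> \<in> unit_cube" and \<epsilon>: "\<epsilon> > 0"
  obtains s where "0 < s" and "s \<le> 1"
    and "payoff (\<beta> + s *\<^sub>R (\<alpha> - \<beta>)) - payoff \<beta>
      \<le> (\<Sum>i\<in>UNIV. payoff (\<beta> + s *\<^sub>R ((\<alpha> $ i - \<beta> $ i) *\<^sub>R e i)) - payoff \<beta>) + \<epsilon> * s"
proof -
  define d where "d = \<alpha> - \<beta>"
  define N where "N = norm1 d"
  have N: "N \<ge> 0" unfolding N_def by (rule norm1_nonneg)
  define \<epsilon>' where "\<epsilon>' = \<epsilon> / (2 * (N + 1))"
  have \<epsilon>': "\<epsilon>' > 0" unfolding \<epsilon>'_def using \<epsilon> N by simp
  obtain \<eta> where \<eta>: "\<eta> > 0" and additive: "\<And>\<delta>0 (\<delta>s :: 'm \<Rightarrow> real^'m). \<delta>0 = (\<Sum>i\<in>UNIV. \<delta>s i) \<Longrightarrow>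
      \<beta> + \<delta>0 \<in> unit_cube \<Longrightarrow> (\<And>i. \<beta> + \<delta>s i \<in> unit_cube) \<Longrightarrow>
      norm1 \<delta>0 \<le> \<eta> \<Longrightarrow> (\<And>i. norm1 (\<delta>s i) \<le> \<eta>) \<Longrightarrow>
      \<bar>(payoff (\<beta> + \<delta>0) - payoff \<beta>) - (\<Sum>i\<in>UNIV. payoff (\<beta> + \<delta>s i) - payoff \<beta>)\<bar>
        \<le> \<epsilon>' * (norm1 \<delta>0 + (\<Sum>i\<in>UNIV. norm1 (\<delta>s i)))"
    using payoff_additivity_defect[OF \<epsilon>'] by blast
  define s where "s = min 1 (\<eta> / (N + 1))"
  have s: "0 < s" "s \<le> 1" unfolding s_def using \<eta> N by auto
  have "s * N \<le> \<eta> / (N + 1) * N" unfolding s_def using N by (intro mult_right_mono) auto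
  also have "\<dots> \<le> \<eta>" using N \<eta> by (simp add: field_simps)
  finally have norm1_sd: "norm1 (s *\<^sub>R d) \<le> \<eta>" unfolding norm1_scaleR N_def using s by simp
  have "\<bar>(payoff (\<beta> + s *\<^sub>R d) - payoff \<beta>) - (\<Sum>i\<in>UNIV. payoff (\<beta> + (s *\<^sub>R d) $ i *\<^sub>R e i) - payoff \<beta>)\<bar>
      \<le> \<epsilon>' * (norm1 (s *\<^sub>R d) + (\<Sum>i\<in>UNIV. norm1 ((s *\<^sub>R d) $ i *\<^sub>R e i)))"
  proof (rule additive)
    show "s *\<^sub>R d = (\<Sum>i\<in>UNIV. (s *\<^sub>R d) $ i *\<^sub>R e i)"
      by (rule sum_e_expansion[symmetric])
    show "\<beta> + s *\<^sub>R d \<in> unit_cube"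
      using convexD[OF convex_unit_cube base_in_cube a, of "1 - s" s] s unfolding d_def
      by (simp add: algebra_simps)
    show "\<beta> + (s *\<^sub>R d) $ i *\<^sub>R e i \<in> unit_cube" for i
      using unit_cube_coordinate_segment[OF base_in_cube a, of s i] s unfolding d_def by simp
    show "norm1 ((s *\<^sub>R d) $ i *\<^sub>R e i) \<le> \<eta>" for i
      using norm1_coordinate_le norm1_sd by (rule order_trans)
  qed (rule norm1_sd)
  also have "\<dots> = \<epsilon>' * (2 * s * N)"
    using s by (simp only: sum_norm1_coordinates) (simp add: norm1_scaleR N_def)
  also have "\<dots> \<le> \<epsilon> * s"
    unfolding \<epsilon>'_def using N \<epsilon> s by (simp add: field_simps)
  finally show ?thesis
    using that[OF s] unfolding d_def by (simp add: abs_le_iff)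
qed

text \<open>Concavity bounds \<open>payoff \<alpha> - payoff \<beta>\<close> by the directional quotient along \<open>\<alpha> - \<beta>\<close>, which approximate
  additivity splits into the coordinate directions.\<close>
lemma payoff_diff_le_sum_coordinate_quotients:
  assumes conc: "concave_on unit_cube payoff" and a: "\<alpha> \<in> unit_cube"
    and L: "\<And>i s. 0 < s \<Longrightarrow> s \<le> 1 \<Longrightarrow> (payoff (\<beta> + s *\<^sub>R ((\<alpha> $ i - \<beta> $ i) *\<^sub>R e i)) - payoff \<beta>) / s \<le> L i"
  shows "payoff \<alpha> - payoff \<beta> \<le> (\<Sum>i\<in>UNIV. L i)"
proof (rule field_le_epsilon)
  fix \<epsilon> :: real assume "0 < \<epsilon>"
  then obtain s where s: "0 < s" "s \<le> 1" and split: "payoff (\<beta> + s *\<^sub>R (\<alpha> - \<beta>)) - payoff \<beta>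
      \<le> (\<Sum>i\<in>UNIV. payoff (\<beta> + s *\<^sub>R ((\<alpha> $ i - \<beta> $ i) *\<^sub>R e i)) - payoff \<beta>) + \<epsilon> * s"
    using payoff_coordinate_splitting[OF a] by blast
  have "s * (payoff \<alpha> - payoff \<beta>) \<le> payoff (\<beta> + s *\<^sub>R (\<alpha> - \<beta>)) - payoff \<beta>"
    using concave_on_difference_quotient_antimono[OF conc base_in_cube _ s order_refl, of "\<alpha> - \<beta>"] a s
    by (simp add: le_divide_eq mult.commute)
  also have "\<dots> \<le> (\<Sum>i\<in>UNIV. s * L i) + \<epsilon> * s"
  proof (rule order_trans[OF split add_right_mono[OF sum_mono]])
    fix i
    show "payoff (\<beta> + s *\<^sub>R ((\<alpha> $ i - \<beta> $ i) *\<^sub>R e i)) - payoff \<beta> \<le> s * L i"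
      using L[OF s, of i] s by (simp add: divide_le_eq mult.commute)
  qed
  finally have "s * (payoff \<alpha> - payoff \<beta>) \<le> s * ((\<Sum>i\<in>UNIV. L i) + \<epsilon>)"
    by (simp add: sum_distrib_left algebra_simps)
  then show "payoff \<alpha> - payoff \<beta> \<le> (\<Sum>i\<in>UNIV. L i) + \<epsilon>"
    using s by simp
qed

lemma concave_payoff_le_sum_directional_derivatives:
  assumes conc: "concave_on unit_cube payoff" and a: "\<alpha> \<in> unit_cube"
  obtains L where
    "\<And>i. ((\<lambda>s. (payoff (\<beta> + s *\<^sub>R ((\<alpha> $ i - \<beta> $ i) *\<^sub>R e i)) - payoff \<beta>) / s) \<longlongrightarrow> L i) (at_right 0)"
    and "payoff \<alpha> - payoff \<beta> \<le> (\<Sum>i\<in>UNIV. L i)"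
proof -
  define Q where "Q i s = (payoff (\<beta> + s *\<^sub>R ((\<alpha> $ i - \<beta> $ i) *\<^sub>R e i)) - payoff \<beta>) / s" for i s
  have "\<forall>i. \<exists>L. (Q i \<longlongrightarrow> L) (at_right 0) \<and> (\<forall>s. 0 < s \<longrightarrow> s \<le> 1 \<longrightarrow> Q i s \<le> L)"
  proof
    fix i
    have "\<beta> + (\<alpha> $ i - \<beta> $ i) *\<^sub>R e i \<in> unit_cube"
      using unit_cube_coordinate_segment[OF base_in_cube a, of 1 i] by simp
    from payoff_difference_quotient_limit[OF conc this]
    obtain L where "(Q i \<longlongrightarrow> L) (at_right 0)" "\<And>s. 0 < s \<Longrightarrow> s \<le> 1 \<Longrightarrow> Q i s \<le> L"
      unfolding Q_def[abs_def] by blast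
    then show "\<exists>L. (Q i \<longlongrightarrow> L) (at_right 0) \<and> (\<forall>s. 0 < s \<longrightarrow> s \<le> 1 \<longrightarrow> Q i s \<le> L)"
      by blast
  qed
  from choice[OF this] obtain L
    where L: "\<forall>i. (Q i \<longlongrightarrow> L i) (at_right 0) \<and> (\<forall>s. 0 < s \<longrightarrow> s \<le> 1 \<longrightarrow> Q i s \<le> L i)"
    by blast
  show ?thesis
  proof (rule that)
    show "((\<lambda>s. (payoff (\<beta> + s *\<^sub>R ((\<alpha> $ i - \<beta> $ i) *\<^sub>R e i)) - payoff \<beta>) / s) \<longlongrightarrow> L i) (at_right 0)" for i
      using L unfolding Q_def[abs_def] by blast
    show "payoff \<alpha> - payoff \<beta> \<le> (\<Sum>i\<in>UNIV. L i)"
      by (rule payoff_diff_le_sum_coordinate_quotients[OF conc a]) (use L in \<open>auto simp: Q_def\<close>)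
  qed
qed

end

section \<open>The relaxed problem\<close>

lemma fhat_binary:
  assumes "f y b = f y 0 + (\<Sum>i\<in>UNIV. f y (b $ i *\<^sub>R e i) - f y 0)" and "b \<in> binary"
  shows "fhat f y b = f y b"
proof -
  have "b $ i *\<^sub>R (f y (e i) - f y 0) = f y (b $ i *\<^sub>R e i) - f y 0" for i
    using assms(2) unfolding binary_def by (cases "b $ i = 0") auto
  then show ?thesis unfolding fhat_def assms(1) by simp
qed

lemma rhat_binary:
  assumes "r y b = r y 0 + (\<Sum>i\<in>UNIV. r y (b $ i *\<^sub>R e i) - r y 0)" and "b \<in> binary"
  shows "rhat r y b = r y b"
proof -
  have "b $ i * (r y (e i) - r y 0) = r y (b $ i *\<^sub>R e i) - r y 0" for i
    using assms(2) unfolding binary_def by (cases "b $ i = 0") auto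
  then show ?thesis unfolding rhat_def assms(1) by simp
qed

lemma fhat_convex_combination:
  "fhat f y ((1 - t) *\<^sub>R b1 + t *\<^sub>R b2) = (1 - t) *\<^sub>R fhat f y b1 + t *\<^sub>R fhat f y b2"
proof -
  have "(\<Sum>j\<in>UNIV. ((1 - t) *\<^sub>R b1 + t *\<^sub>R b2) $ j *\<^sub>R (f y (e j) - f y 0))
      = (1 - t) *\<^sub>R (\<Sum>j\<in>UNIV. b1 $ j *\<^sub>R (f y (e j) - f y 0)) + t *\<^sub>R (\<Sum>j\<in>UNIV. b2 $ j *\<^sub>R (f y (e j) - f y 0))"
    by (simp add: scaleR_add_left scaleR_sum_right sum.distrib)
  then show ?thesis unfolding fhat_def by (simp add: algebra_simps)
qed

lemma rhat_convex_combination: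
  "rhat r y ((1 - t) *\<^sub>R b1 + t *\<^sub>R b2) = (1 - t) * rhat r y b1 + t * rhat r y b2"
proof -
  have "(\<Sum>j\<in>UNIV. ((1 - t) *\<^sub>R b1 + t *\<^sub>R b2) $ j * (r y (e j) - r y 0))
      = (1 - t) * (\<Sum>j\<in>UNIV. b1 $ j * (r y (e j) - r y 0)) + t * (\<Sum>j\<in>UNIV. b2 $ j * (r y (e j) - r y 0))"
    by (simp add: distrib_right sum_distrib_left sum.distrib mult.assoc)
  then show ?thesis unfolding rhat_def by (simp add: algebra_simps)
qed

lemma fhat_lipschitz:
  assumes "\<And>b. b \<in> binary \<Longrightarrow> \<exists>L. L-lipschitz_on X (\<lambda>y. f y b)"
  shows "\<exists>K. \<forall>\<alpha>\<in>unit_cube. K-lipschitz_on X (\<lambda>y. fhat f y \<alpha>)"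
proof -
  obtain L where L: "\<And>b. b \<in> binary \<Longrightarrow> (L b)-lipschitz_on X (\<lambda>y. f y b)"
    using assms by metis
  define K where "K = L 0 + (\<Sum>j\<in>UNIV. L (e j) + L 0)"
  have "K-lipschitz_on X (\<lambda>y. fhat f y \<alpha>)" if \<alpha>: "\<alpha> \<in> unit_cube" for \<alpha>
  proof (rule lipschitz_onI)
    show "0 \<le> K" unfolding K_def
      using lipschitz_on_nonneg[OF L] zero_binary e_binary by (intro add_nonneg_nonneg sum_nonneg) auto
    fix y z assume y: "y \<in> X" and z: "z \<in> X"
    have f0: "norm (f y 0 - f z 0) \<le> L 0 * dist y z"
      using lipschitz_onD[OF L[OF zero_binary] y z] by (simp add: dist_norm)
    have fj: "norm (\<alpha> $ j *\<^sub>R ((f y (e j) - f y 0) - (f z (e j) - f z 0))) \<le> (L (e j) + L 0) * dist y z" for j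
    proof -
      have "0 \<le> \<alpha> $ j" "\<alpha> $ j \<le> 1" using \<alpha> unfolding unit_cube_def by auto
      then have "norm (\<alpha> $ j *\<^sub>R ((f y (e j) - f y 0) - (f z (e j) - f z 0)))
          \<le> norm ((f y (e j) - f z (e j)) - (f y 0 - f z 0))"
        by (simp add: algebra_simps mult_left_le_one_le del: scaleR_diff_right)
      also have "\<dots> \<le> norm (f y (e j) - f z (e j)) + norm (f y 0 - f z 0)"
        by (rule norm_triangle_ineq4)
      also have "\<dots> \<le> L (e j) * dist y z + L 0 * dist y z"
        using lipschitz_onD[OF L[OF e_binary] y z] f0 by (intro add_mono) (simp_all add: dist_norm)
      finally show ?thesis by (simp add: algebra_simps)
    qed
    have eq: "fhat f y \<alpha> - fhat f z \<alpha>
        = (f y 0 - f z 0) + (\<Sum>j\<in>UNIV. \<alpha> $ j *\<^sub>R ((f y (e j) - f y 0) - (f z (e j) - f z 0)))"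
      unfolding fhat_def by (simp add: scaleR_diff_right sum_subtractf)
    have "norm (fhat f y \<alpha> - fhat f z \<alpha>)
        \<le> norm (f y 0 - f z 0) + (\<Sum>j\<in>UNIV. norm (\<alpha> $ j *\<^sub>R ((f y (e j) - f y 0) - (f z (e j) - f z 0))))"
      unfolding eq by (rule order_trans[OF norm_triangle_ineq add_left_mono[OF norm_sum]])
    also have "\<dots> \<le> L 0 * dist y z + (\<Sum>j\<in>UNIV. (L (e j) + L 0) * dist y z)"
      using f0 fj by (intro add_mono sum_mono)
    finally have "norm (fhat f y \<alpha> - fhat f z \<alpha>) \<le> L 0 * dist y z + (\<Sum>j\<in>UNIV. (L (e j) + L 0) * dist y z)" .
    then show "dist (fhat f y \<alpha>) (fhat f z \<alpha>) \<le> K * dist y z"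
      unfolding K_def by (simp add: dist_norm sum_distrib_right distrib_right)
  qed
  then show ?thesis by blast
qed

lemma Jpay_eq_Jhat:
  assumes T: "0 \<le> T" and b: "b \<in> binary"
    and sol: "unique_sol X T x0 (\<lambda>y. f y b)"
    and sol_hat: "\<And>a. a \<in> unit_cube \<Longrightarrow> unique_sol X T x0 (\<lambda>y. fhat f y a)"
    and f_eq: "\<And>y b. y \<in> X \<Longrightarrow> b \<in> binary \<Longrightarrow> fhat f y b = f y b"
    and r_eq: "\<And>y b. y \<in> X \<Longrightarrow> b \<in> binary \<Longrightarrow> rhat r y b = r y b"
  shows "Jpay X T x0 f r q b = Jhat X T x0 f r q b"
proof -
  define z where "z = traj X T x0 (\<lambda>y. f y b)"
  have z: "solves X T x0 (\<lambda>y. f y b) z" unfolding z_def by (rule traj_solves[OF sol])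
  have "solves X T x0 (\<lambda>y. fhat f y b) z" by (rule solves_cong[OF z]) (use f_eq b in simp)
  then have traj_eq: "traj X T x0 (\<lambda>y. fhat f y b) t = z t" if "t \<in> {0..T}" for t
    using traj_eq_solution[OF sol_hat[OF binary_imp_unit_cube[OF b]] _ that] by blast
  have "integral {0..T} (\<lambda>t. r (z t) b) = integral {0..T} (\<lambda>t. rhat r (traj X T x0 (\<lambda>y. fhat f y b) t) b)"
    using z r_eq b traj_eq unfolding solves_def by (intro integral_cong) auto
  then show ?thesis
    unfolding Jpay_def Jcal_def Jhat_def Let_def z_def[symmetric] using traj_eq[of T] T by simp
qed

lemma Jeps_eq_Jhat:
  assumes T: "0 \<le> T" and b1: "b1 \<in> binary" and b2: "b2 \<in> binary" and t: "0 \<le> t" "t \<le> 1"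
    and sol: "unique_sol X T x0 (\<lambda>y. (1 - t) *\<^sub>R f y b1 + t *\<^sub>R f y b2)"
    and sol_hat: "\<And>a. a \<in> unit_cube \<Longrightarrow> unique_sol X T x0 (\<lambda>y. fhat f y a)"
    and f_eq: "\<And>y b. y \<in> X \<Longrightarrow> b \<in> binary \<Longrightarrow> fhat f y b = f y b"
    and r_eq: "\<And>y b. y \<in> X \<Longrightarrow> b \<in> binary \<Longrightarrow> rhat r y b = r y b"
    and r_cont: "\<And>b. b \<in> binary \<Longrightarrow> continuous_on UNIV (\<lambda>y. r y b)"
  shows "Jeps X T x0 f r q b1 b2 t = Jhat X T x0 f r q ((1 - t) *\<^sub>R b1 + t *\<^sub>R b2)"
proof -
  define \<gamma> where "\<gamma> = (1 - t) *\<^sub>R b1 + t *\<^sub>R b2"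
  have "\<gamma> \<in> unit_cube"
    unfolding \<gamma>_def using convexD[OF convex_unit_cube binary_imp_unit_cube[OF b1] binary_imp_unit_cube[OF b2]] t
    by simp
  define z where "z = traj X T x0 (\<lambda>y. (1 - t) *\<^sub>R f y b1 + t *\<^sub>R f y b2)"
  have z: "solves X T x0 (\<lambda>y. (1 - t) *\<^sub>R f y b1 + t *\<^sub>R f y b2) z" unfolding z_def by (rule traj_solves[OF sol])
  have "solves X T x0 (\<lambda>y. fhat f y \<gamma>) z"
    by (rule solves_cong[OF z]) (use f_eq b1 b2 in \<open>simp add: \<gamma>_def fhat_convex_combination\<close>)
  then have traj_eq: "traj X T x0 (\<lambda>y. fhat f y \<gamma>) s = z s" if "s \<in> {0..T}" for s
    using traj_eq_solution[OF sol_hat[OF \<open>\<gamma> \<in> unit_cube\<close>] _ that] by blast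
  have int: "(\<lambda>s. r (z s) b) integrable_on {0..T}" if "b \<in> binary" for b
    by (rule integrable_continuous_real, rule continuous_on_compose2[OF r_cont[OF that] solves_continuous_on[OF z]]) auto
  have "(1 - t) * integral {0..T} (\<lambda>s. r (z s) b1) + t * integral {0..T} (\<lambda>s. r (z s) b2)
      = integral {0..T} (\<lambda>s. (1 - t) * r (z s) b1 + t * r (z s) b2)"
    using integrable_on_cmult_left[OF int[OF b1], of "1 - t"] integrable_on_cmult_left[OF int[OF b2], of t]
    by (simp add: integral_add)
  also have "\<dots> = integral {0..T} (\<lambda>s. rhat r (traj X T x0 (\<lambda>y. fhat f y \<gamma>) s) \<gamma>)"
    using z r_eq b1 b2 traj_eq unfolding solves_def \<gamma>_def rhat_convex_combination by (intro integral_cong) auto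
  finally show ?thesis
    unfolding Jeps_def Jcal_def Jhat_def Let_def z_def[symmetric] \<gamma>_def[symmetric]
    using traj_eq[of T] T by (simp add: algebra_simps)
qed

text \<open>When \<open>ab $ i = 1\<close> both the difference quotient in \<open>DNS\<close> and the direction \<open>a $ i - ab $ i\<close> change sign.\<close>
lemma DNS_mult_eq_directional_derivative:
  assumes ab: "ab \<in> binary" and a: "a \<in> binary"
    and Jpay_eq: "Jpay X T x0 f r q ab = h ab"
    and Jeps_eq: "\<And>b s. b \<in> binary \<Longrightarrow> 0 < s \<Longrightarrow> s < 1 \<Longrightarrow> Jeps X T x0 f r q ab b s = h ((1 - s) *\<^sub>R ab + s *\<^sub>R b)"
    and lim: "((\<lambda>s. (h (ab + s *\<^sub>R ((a $ i - ab $ i) *\<^sub>R e i)) - h ab) / s) \<longlongrightarrow> L) (at_right 0)"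
  shows "DNS X T x0 f r q ab i * (a $ i - ab $ i) = L"
proof -
  have ev: "\<forall>\<^sub>F s in at_right (0::real). 0 < s \<and> s < 1"
    using eventually_at_right_real[of 0 1] by simp
  have ai: "a $ i = 0 \<or> a $ i = 1" and abi: "ab $ i = 0 \<or> ab $ i = 1"
    using a ab unfolding binary_def by auto
  then consider "a $ i = ab $ i" | "ab $ i = 0" "a $ i = 1" | "ab $ i = 1" "a $ i = 0" by auto
  then show ?thesis
  proof cases
    case 1
    then have "((\<lambda>s. 0) \<longlongrightarrow> L) (at_right (0::real))" using lim by simp
    then have "L = 0" by (rule tendsto_unique[OF trivial_limit_at_right_real _ tendsto_const])
    then show ?thesis using 1 by simp
  next
    case 2
    have b: "ab + e i \<in> binary" using ab 2 unfolding binary_def by (auto simp: e_nth)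
    have "\<forall>\<^sub>F s in at_right 0. (Jeps X T x0 f r q ab (ab + e i) s - Jpay X T x0 f r q ab) / s
        = (h (ab + s *\<^sub>R ((a $ i - ab $ i) *\<^sub>R e i)) - h ab) / s"
      using ev by eventually_elim (simp add: Jeps_eq[OF b] Jpay_eq 2 algebra_simps)
    then have "((\<lambda>s. (Jeps X T x0 f r q ab (ab + e i) s - Jpay X T x0 f r q ab) / s) \<longlongrightarrow> L) (at_right 0)"
      using lim by (rule tendsto_cong[THEN iffD2])
    then show ?thesis using 2 unfolding DNS_def by (simp add: tendsto_Lim)
  next
    case 3
    have b: "ab - e i \<in> binary" using ab 3 unfolding binary_def by (auto simp: e_nth)
    have "\<forall>\<^sub>F s in at_right 0. (Jpay X T x0 f r q ab - Jeps X T x0 f r q ab (ab - e i) s) / s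
        = - ((h (ab + s *\<^sub>R ((a $ i - ab $ i) *\<^sub>R e i)) - h ab) / s)"
      using ev by eventually_elim (simp add: Jeps_eq[OF b] Jpay_eq 3 algebra_simps minus_divide_left)
    then have "((\<lambda>s. (Jpay X T x0 f r q ab - Jeps X T x0 f r q ab (ab - e i) s) / s) \<longlongrightarrow> - L) (at_right 0)"
      using tendsto_minus[OF lim] by (rule tendsto_cong[THEN iffD2])
    then show ?thesis using 3 unfolding DNS_def by (simp add: tendsto_Lim)
  qed
qed

lemma control_payoff_relaxation:
  fixes X :: "(real^'n::finite) set" and f :: "real^'n \<Rightarrow> real^'m::finite \<Rightarrow> real^'n"
    and r :: "real^'n \<Rightarrow> real^'m \<Rightarrow> real" and q :: "real^'n \<Rightarrow> real"
  assumes T_pos: "T > 0"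
    and sol_hat: "\<And>a. a \<in> unit_cube \<Longrightarrow> unique_sol X T x0 (\<lambda>y. fhat f y a)"
    and f_C2: "\<And>a. a \<in> binary \<Longrightarrow> C2 (\<lambda>y. f y a)"
    and f_lipschitz: "\<And>a. a \<in> binary \<Longrightarrow> \<exists>L. L-lipschitz_on X (\<lambda>y. f y a)"
    and r_C1: "\<And>a. a \<in> binary \<Longrightarrow> C1 (\<lambda>y. r y a)" and q_C1: "C1 q"
    and f_eq: "\<And>y b. y \<in> X \<Longrightarrow> b \<in> binary \<Longrightarrow> fhat f y b = f y b"
    and r_eq: "\<And>y b. y \<in> X \<Longrightarrow> b \<in> binary \<Longrightarrow> rhat r y b = r y b"
    and ab: "ab \<in> binary"
  shows "control_payoff X T x0 (\<lambda>\<alpha> y. fhat f y \<alpha>) (\<lambda>j y. f y (e j) - f y 0)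
           (\<lambda>\<alpha> y. rhat r y \<alpha>) (\<lambda>j y. r y (e j) - r y 0) q ab (\<lambda>y. f y ab) (\<lambda>y. r y ab)"
proof unfold_locales
  have f_cont: "continuous_on UNIV (\<lambda>y. f y b)" and r_cont: "continuous_on UNIV (\<lambda>y. r y b)"
    if "b \<in> binary" for b
    using C1_imp_continuous_on C2_imp_C1 f_C2 r_C1 that by blast+
  show "continuous_on UNIV (\<lambda>y. fhat f y 0)"
    using f_cont[OF zero_binary] by (simp add: fhat_def)
  show "continuous_on UNIV (\<lambda>y. f y (e j) - f y 0)" for j
    by (intro continuous_intros f_cont zero_binary e_binary)
  show "continuous_on UNIV (\<lambda>y. rhat r y 0)"
    using r_cont[OF zero_binary] by (simp add: rhat_def)
  show "continuous_on UNIV (\<lambda>y. r y (e j) - r y 0)" for j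
    by (intro continuous_intros r_cont zero_binary e_binary)
  show "\<exists>K. \<forall>\<alpha>\<in>unit_cube. K-lipschitz_on X (\<lambda>y. fhat f y \<alpha>)"
    by (rule fhat_lipschitz[OF f_lipschitz])
  show "unique_sol X T x0 (\<lambda>y. fhat f y \<alpha>)" if "\<alpha> \<in> unit_cube" for \<alpha>
    using sol_hat[OF that] .
  show "fhat f y ab = f y ab" and "rhat r y ab = r y ab" if "y \<in> X" for y
    using f_eq[OF that ab] r_eq[OF that ab] .
qed (simp_all add: T_pos q_C1 ab r_C1 f_C2 fhat_def rhat_def C2_imp_C1 binary_imp_unit_cube)

theorem theorem3:
  fixes X :: "(real^'n) set" and x0 :: "real^'n" and T :: real
    and f :: "real^'n \<Rightarrow> real^'m::finite \<Rightarrow> real^'n"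
    and r :: "real^'n \<Rightarrow> real^'m \<Rightarrow> real" and q :: "real^'n \<Rightarrow> real"
  assumes T_pos: "T > 0"
    and x0_in: "x0 \<in> X"
    \<comment> \<open>standing assumption: the relevant ODEs have unique solutions on [0,T]\<close>
    and sol_bin: "\<And>b. b \<in> binary \<Longrightarrow> unique_sol X T x0 (\<lambda>y. f y b)"
    and sol_eps: "\<And>ab a eps. ab \<in> binary \<Longrightarrow> a \<in> binary \<Longrightarrow> 0 \<le> eps \<Longrightarrow> eps \<le> 1 \<Longrightarrow>
                    unique_sol X T x0 (\<lambda>y. (1 - eps) *\<^sub>R f y ab + eps *\<^sub>R f y a)"
    and sol_hat: "\<And>a. a \<in> unit_cube \<Longrightarrow> unique_sol X T x0 (\<lambda>y. fhat f y a)"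
    \<comment> \<open>(A1)\<close>
    and A1_C2: "\<And>a. a \<in> binary \<Longrightarrow> C2 (\<lambda>y. f y a)"
    and A1_lip: "\<And>a. a \<in> binary \<Longrightarrow> \<exists>L. L-lipschitz_on X (\<lambda>y. f y a)"
    \<comment> \<open>(A3)\<close>
    and A3_r: "\<And>a. a \<in> binary \<Longrightarrow> C1 (\<lambda>y. r y a)"
    and A3_q: "C1 q"
    \<comment> \<open>(Add)\<close>
    and Add_f: "\<And>y a. y \<in> X \<Longrightarrow> a \<in> binary \<Longrightarrow>
                  f y a = f y 0 + (\<Sum>i\<in>UNIV. f y ((a $ i) *\<^sub>R e i) - f y 0)"
    and Add_r: "\<And>y a. y \<in> X \<Longrightarrow> a \<in> binary \<Longrightarrow>
                  r y a = r y 0 + (\<Sum>i\<in>UNIV. r y ((a $ i) *\<^sub>R e i) - r y 0)"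
    \<comment> \<open>concavity of the reformulated payoff\<close>
    and concave: "concave_on unit_cube (Jhat X T x0 f r q)"
    and ab_bin: "ab \<in> binary"
    and a_bin: "a \<in> binary"
  shows "(\<Sum>i\<in>UNIV. DNS X T x0 f r q ab i * (a $ i - ab $ i))
           \<ge> Jpay X T x0 f r q a - Jpay X T x0 f r q ab"
proof -
  have f_eq: "fhat f y b = f y b" and r_eq: "rhat r y b = r y b" if "y \<in> X" "b \<in> binary" for y b
    using fhat_binary[where f = f, OF Add_f[OF that] that(2)] rhat_binary[where r = r, OF Add_r[OF that] that(2)]
    by blast+
  interpret control_payoff X T x0 "\<lambda>\<alpha> y. fhat f y \<alpha>" "\<lambda>j y. f y (e j) - f y 0"
      "\<lambda>\<alpha> y. rhat r y \<alpha>" "\<lambda>j y. r y (e j) - r y 0" q ab "\<lambda>y. f y ab" "\<lambda>y. r y ab"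
    by (rule control_payoff_relaxation[OF T_pos sol_hat A1_C2 A1_lip A3_r A3_q f_eq r_eq ab_bin])
  have payoff_eq: "payoff = Jhat X T x0 f r q"
    by (rule ext) (simp add: payoff_def sol_def Jhat_def Let_def)
  have Jpay: "Jpay X T x0 f r q b = payoff b" if "b \<in> binary" for b
    using Jpay_eq_Jhat[OF _ that sol_bin[OF that] sol_hat f_eq r_eq] T_pos payoff_eq by simp
  have Jeps: "Jeps X T x0 f r q ab b s = payoff ((1 - s) *\<^sub>R ab + s *\<^sub>R b)"
    if "b \<in> binary" "0 < s" "s < 1" for b s
    using Jeps_eq_Jhat[OF _ ab_bin that(1) _ _ sol_eps[OF ab_bin that(1)] sol_hat f_eq r_eq
        C1_imp_continuous_on[OF A3_r]] that T_pos payoff_eq by simp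
  obtain L where L: "\<And>i. ((\<lambda>s. (payoff (ab + s *\<^sub>R ((a $ i - ab $ i) *\<^sub>R e i)) - payoff ab) / s) \<longlongrightarrow> L i) (at_right 0)"
    and le: "payoff a - payoff ab \<le> (\<Sum>i\<in>UNIV. L i)"
    using concave_payoff_le_sum_directional_derivatives[OF _ binary_imp_unit_cube[OF a_bin]] concave
    unfolding payoff_eq by blast
  have "DNS X T x0 f r q ab i * (a $ i - ab $ i) = L i" for i
    by (rule DNS_mult_eq_directional_derivative[OF ab_bin a_bin Jpay[OF ab_bin] Jeps L])
  then show ?thesis using le Jpay[OF a_bin] Jpay[OF ab_bin] by simp
qed

end
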